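(* Let $\iota:\mathcal{Q}\to\mathcal{P}$ be an aligned grid inclusion with $\mathcal{Q}$ finite (and $\mathcal{P}$ an arbitrary grid poset). Then the restriction functor $\mathrm{Res}_\iota:\operatorname{rep}\mathcal{P}\to\operatorname{rep}\mathcal{Q}$, $M\mapsto M\circ\iota$, has a left adjoint $\mathrm{Lan}_\iota:\operatorname{rep}\mathcal{Q}\to\operatorname{rep}\mathcal{P}$, which is exact and fully faithful, and which maps spread-approximations (in $\operatorname{rep}\mathcal{Q}$) to spread-approximations (in $\operatorname{rep}\mathcal{P}$).
   Context: Fix a field $\mathbb{k}$. Representations of a poset $\mathcal{P}$ are functors $\mathcal{P}\to\mathrm{Vec}_\mathbb{k}$ (viewing $\mathcal{P}$ as a category). $\uparrow S=\{p:\exists s\in S, s\le p\}$. A spread is a subset that is convex ($s\le p\le s'$, $s,s'\in S$ implies $p\in S$) and connected (nonempty, any two elements joined by a zigzag of comparable elements in $S$). $\mathbb{k}_S$ denotes the indicator representation of a convex set $S$ (value $\mathbb{k}$ on $S$, $0$ elsewhere, identity maps inside $S$). $\operatorname{rep}\mathcal{P}$ is the category of finitely presented representations (cokernels of morphisms between finite direct sums of $\mathbb{k}_{\uparrow\{p\}}$). A spread-approximation of $M\in\operatorname{rep}\mathcal{P}$ is a morphism $f:C\to M$ with $C$ a direct summand of a finite direct sum of finitely presented spread representations, such that every morphism from such a representation to $M$ factors through $f$. A grid poset is a finite product of totally ordered sets with the product order. An aligned grid inclusion $\mathcal{Q}_1\times\cdots\times\mathcal{Q}_n\to\mathcal{P}_1\times\cdots\times\mathcal{P}_n$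 is a map of the form $\iota_1\times\cdots\times\iota_n$ with each $\iota_j:\mathcal{Q}_j\to\mathcal{P}_j$ an injective order-preserving map between totally ordered sets. *)

theory Defs
  imports "Jordan_Normal_Form.Matrix"
begin

text \<open>Concrete model of pointwise finite-dimensional representations of a poset (X, lr):
 a representation assigns to each point p a dimension d p (the space k^(d p)) and to each
 comparable pair p \<le> q a matrix (d q) x (d p); outside X / on non-comparable pairs the data is
 canonically zero. Finitely presented representations are pointwise finite-dimensional,
 so every object of rep P is isomorphic to one of these.\<close>

type_synonym ('p,'k) prep = "('p \<Rightarrow> nat) \<times> ('p \<Rightarrow> 'p \<Rightarrow> 'k mat)"
type_synonym ('p,'k) pmor = "'p \<Rightarrow> 'k mat"

definition is_rep :: "'p set \<Rightarrow> ('p \<Rightarrow> 'p \<Rightarrow> bool) \<Rightarrow> ('p,'k::field) prep \<Rightarrow> bool" where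
"is_rep X lr M \<longleftrightarrow>
  (\<forall>p. p \<notin> X \<longrightarrow> fst M p = 0) \<and>
  (\<forall>p q. \<not> (p \<in> X \<and> q \<in> X \<and> lr p q) \<longrightarrow> snd M p q = 0\<^sub>m (fst M q) (fst M p)) \<and>
  (\<forall>p\<in>X. \<forall>q\<in>X. lr p q \<longrightarrow> snd M p q \<in> carrier_mat (fst M q) (fst M p)) \<and>
  (\<forall>p\<in>X. snd M p p = 1\<^sub>m (fst M p)) \<and>
  (\<forall>p\<in>X. \<forall>q\<in>X. \<forall>s\<in>X. lr p q \<and> lr q s \<longrightarrow> snd M p s = snd M q s * snd M p q)"

definition is_mor :: "'p set \<Rightarrow> ('p \<Rightarrow> 'p \<Rightarrow> bool) \<Rightarrow> ('p,'k::field) prep \<Rightarrow> ('p,'k) prep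
    \<Rightarrow> ('p,'k) pmor \<Rightarrow> bool" where
"is_mor X lr M N f \<longleftrightarrow> is_rep X lr M \<and> is_rep X lr N \<and>
  (\<forall>p. p \<notin> X \<longrightarrow> f p = 0\<^sub>m (fst N p) (fst M p)) \<and>
  (\<forall>p\<in>X. f p \<in> carrier_mat (fst N p) (fst M p)) \<and>
  (\<forall>p\<in>X. \<forall>q\<in>X. lr p q \<longrightarrow> f q * snd M p q = snd N p q * f p)"

definition id_mor :: "'p set \<Rightarrow> ('p,'k::field) prep \<Rightarrow> ('p,'k) pmor" where
"id_mor X M = (\<lambda>p. if p \<in> X then 1\<^sub>m (fst M p) else 0\<^sub>m (fst M p) (fst M p))"

definition comp_mor :: "('p,'k::field) pmor \<Rightarrow> ('p,'k) pmor \<Rightarrow> ('p,'k) pmor" where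
"comp_mor g f = (\<lambda>p. g p * f p)"

definition zero_rep :: "('p,'k::field) prep" where
"zero_rep = (\<lambda>p. 0, \<lambda>p q. 0\<^sub>m 0 0)"

definition dsum :: "('p,'k::field) prep \<Rightarrow> ('p,'k) prep \<Rightarrow> ('p,'k) prep" where
"dsum M N = (\<lambda>p. fst M p + fst N p,
   \<lambda>p q. four_block_mat (snd M p q) (0\<^sub>m (fst M q) (fst N p))
                        (0\<^sub>m (fst N q) (fst M p)) (snd N p q))"

definition dsum_list :: "('p,'k::field) prep list \<Rightarrow> ('p,'k) prep" where
"dsum_list Ms = foldr dsum Ms zero_rep"

definition indicator_rep :: "('p \<Rightarrow> 'p \<Rightarrow> bool) \<Rightarrow> 'p set \<Rightarrow> ('p,'k::field) prep" where
"indicator_rep lr S = (\<lambda>p. if p \<in> S then 1 else 0,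
   \<lambda>p q. if p \<in> S \<and> q \<in> S \<and> lr p q then 1\<^sub>m 1
         else 0\<^sub>m (if q \<in> S then 1 else 0) (if p \<in> S then 1 else 0))"

definition upset :: "'p set \<Rightarrow> ('p \<Rightarrow> 'p \<Rightarrow> bool) \<Rightarrow> 'p set \<Rightarrow> 'p set" where
"upset X lr S = {q \<in> X. \<exists>s\<in>S. lr s q}"

definition free_rep :: "'p set \<Rightarrow> ('p \<Rightarrow> 'p \<Rightarrow> bool) \<Rightarrow> 'p list \<Rightarrow> ('p,'k::field) prep" where
"free_rep X lr as = dsum_list (map (\<lambda>a. indicator_rep lr (upset X lr {a})) as)"

definition mat_img :: "'k::field mat \<Rightarrow> 'k vec set" where
"mat_img A = {A *\<^sub>v v | v. v \<in> carrier_vec (dim_col A)}"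

definition mat_ker :: "'k::field mat \<Rightarrow> 'k vec set" where
"mat_ker A = {v \<in> carrier_vec (dim_col A). A *\<^sub>v v = 0\<^sub>v (dim_row A)}"

definition is_fp :: "'p set \<Rightarrow> ('p \<Rightarrow> 'p \<Rightarrow> bool) \<Rightarrow> ('p,'k::field) prep \<Rightarrow> bool" where
"is_fp X lr M \<longleftrightarrow> is_rep X lr M \<and>
  (\<exists>as bs h e. set as \<subseteq> X \<and> set bs \<subseteq> X \<and>
     is_mor X lr (free_rep X lr as) (free_rep X lr bs) h \<and>
     is_mor X lr (free_rep X lr bs) M e \<and>
     (\<forall>p\<in>X. mat_img (h p) = mat_ker (e p) \<and> mat_img (e p) = carrier_vec (fst M p)))"

text \<open>Short exact sequence 0 -> A -f-> B -g-> C -> 0 (kernels/cokernels are pointwise).\<close>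
definition short_exact :: "'p set \<Rightarrow> ('p,'k::field) pmor \<Rightarrow> ('p,'k) pmor \<Rightarrow> bool" where
"short_exact X f g \<longleftrightarrow> (\<forall>p\<in>X.
   mat_ker (f p) = {0\<^sub>v (dim_col (f p))} \<and> mat_img (f p) = mat_ker (g p) \<and>
   mat_img (g p) = carrier_vec (dim_row (g p)))"

definition convex_in :: "'p set \<Rightarrow> ('p \<Rightarrow> 'p \<Rightarrow> bool) \<Rightarrow> 'p set \<Rightarrow> bool" where
"convex_in X lr S \<longleftrightarrow> (\<forall>s\<in>S. \<forall>s'\<in>S. \<forall>p\<in>X. lr s p \<and> lr p s' \<longrightarrow> p \<in> S)"

definition connected_in :: "('p \<Rightarrow> 'p \<Rightarrow> bool) \<Rightarrow> 'p set \<Rightarrow> bool" where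
"connected_in lr S \<longleftrightarrow> S \<noteq> {} \<and>
  (\<forall>s\<in>S. \<forall>t\<in>S. (\<lambda>x y. x \<in> S \<and> y \<in> S \<and> (lr x y \<or> lr y x))\<^sup>*\<^sup>* s t)"

definition spread :: "'p set \<Rightarrow> ('p \<Rightarrow> 'p \<Rightarrow> bool) \<Rightarrow> 'p set \<Rightarrow> bool" where
"spread X lr S \<longleftrightarrow> S \<subseteq> X \<and> convex_in X lr S \<and> connected_in lr S"

definition is_iso :: "'p set \<Rightarrow> ('p \<Rightarrow> 'p \<Rightarrow> bool) \<Rightarrow> ('p,'k::field) prep \<Rightarrow> ('p,'k) prep
    \<Rightarrow> ('p,'k) pmor \<Rightarrow> bool" where
"is_iso X lr A B u \<longleftrightarrow> is_mor X lr A B u \<and>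
  (\<exists>v. is_mor X lr B A v \<and> comp_mor v u = id_mor X A \<and> comp_mor u v = id_mor X B)"

definition spread_summand :: "'p set \<Rightarrow> ('p \<Rightarrow> 'p \<Rightarrow> bool) \<Rightarrow> ('p,'k::field) prep \<Rightarrow> bool" where
"spread_summand X lr C \<longleftrightarrow> is_fp X lr C \<and>
  (\<exists>C' Ss u. is_fp X lr C' \<and>
     (\<forall>S\<in>set Ss. spread X lr S \<and> is_fp X lr (indicator_rep lr S :: ('p,'k) prep)) \<and>
     is_iso X lr (dsum C C') (dsum_list (map (indicator_rep lr) Ss)) u)"

definition spread_approx :: "'p set \<Rightarrow> ('p \<Rightarrow> 'p \<Rightarrow> bool) \<Rightarrow> ('p,'k::field) prep
    \<Rightarrow> ('p,'k) prep \<Rightarrow> ('p,'k) pmor \<Rightarrow> bool" where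
"spread_approx X lr C M f \<longleftrightarrow> is_fp X lr M \<and> spread_summand X lr C \<and> is_mor X lr C M f \<and>
  (\<forall>S g. spread X lr S \<and> is_fp X lr (indicator_rep lr S :: ('p,'k) prep) \<and>
         is_mor X lr (indicator_rep lr S) M g \<longrightarrow>
         (\<exists>h. is_mor X lr (indicator_rep lr S) C h \<and> comp_mor f h = g))"

definition is_functor :: "'p set \<Rightarrow> ('p \<Rightarrow> 'p \<Rightarrow> bool) \<Rightarrow> 'q set \<Rightarrow> ('q \<Rightarrow> 'q \<Rightarrow> bool)
   \<Rightarrow> (('p,'k::field) prep \<Rightarrow> ('q,'k) prep)
   \<Rightarrow> (('p,'k) prep \<Rightarrow> ('p,'k) prep \<Rightarrow> ('p,'k) pmor \<Rightarrow> ('q,'k) pmor) \<Rightarrow> bool" where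
"is_functor X1 lr1 X2 lr2 Fo Fm \<longleftrightarrow>
  (\<forall>M. is_fp X1 lr1 M \<longrightarrow> is_fp X2 lr2 (Fo M)) \<and>
  (\<forall>M N f. is_fp X1 lr1 M \<and> is_fp X1 lr1 N \<and> is_mor X1 lr1 M N f \<longrightarrow>
      is_mor X2 lr2 (Fo M) (Fo N) (Fm M N f)) \<and>
  (\<forall>M. is_fp X1 lr1 M \<longrightarrow> Fm M M (id_mor X1 M) = id_mor X2 (Fo M)) \<and>
  (\<forall>M N L f g. is_fp X1 lr1 M \<and> is_fp X1 lr1 N \<and> is_fp X1 lr1 L \<and>
      is_mor X1 lr1 M N f \<and> is_mor X1 lr1 N L g \<longrightarrow>
      Fm M L (comp_mor g f) = comp_mor (Fm N L g) (Fm M N f))"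

definition grid :: "'a::linorder set list \<Rightarrow> 'a list set" where
"grid Ps = {xs. length xs = length Ps \<and> (\<forall>j<length Ps. xs ! j \<in> Ps ! j)}"

definition grid_le :: "'a::linorder list \<Rightarrow> 'a list \<Rightarrow> bool" where
"grid_le xs ys \<longleftrightarrow> list_all2 (\<le>) xs ys"

definition grid_map :: "('b \<Rightarrow> 'a) list \<Rightarrow> 'b list \<Rightarrow> 'a list" where
"grid_map \<iota>s q = map (\<lambda>j. (\<iota>s ! j) (q ! j)) [0..<length \<iota>s]"

definition aligned_grid_inclusion :: "'b::linorder set list \<Rightarrow> 'a::linorder set list
    \<Rightarrow> ('b \<Rightarrow> 'a) list \<Rightarrow> bool" where
"aligned_grid_inclusion Qs Ps \<iota>s \<longleftrightarrow> length Qs = length Ps \<and> length \<iota>s = length Ps \<and>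
  (\<forall>j<length Ps. inj_on (\<iota>s ! j) (Qs ! j) \<and> (\<iota>s ! j) ` (Qs ! j) \<subseteq> Ps ! j \<and>
                 mono_on (Qs ! j) (\<iota>s ! j))"

definition res_obj :: "'q set \<Rightarrow> ('q \<Rightarrow> 'q \<Rightarrow> bool) \<Rightarrow> ('q \<Rightarrow> 'p) \<Rightarrow> ('p,'k::field) prep
    \<Rightarrow> ('q,'k) prep" where
"res_obj Xq lrq i N = (let d = (\<lambda>q. if q \<in> Xq then fst N (i q) else 0) in
   (d, \<lambda>q q'. if q \<in> Xq \<and> q' \<in> Xq \<and> lrq q q' then snd N (i q) (i q') else 0\<^sub>m (d q') (d q)))"

definition res_mor :: "'q set \<Rightarrow> ('q \<Rightarrow> 'p) \<Rightarrow> ('p,'k::field) pmor \<Rightarrow> ('q,'k) pmor" where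
"res_mor Xq i g = (\<lambda>q. if q \<in> Xq then g (i q) else 0\<^sub>m 0 0)"

definition left_adjoint_to_res :: "'q set \<Rightarrow> ('q \<Rightarrow> 'q \<Rightarrow> bool) \<Rightarrow> 'p set \<Rightarrow> ('p \<Rightarrow> 'p \<Rightarrow> bool)
   \<Rightarrow> ('q \<Rightarrow> 'p) \<Rightarrow> (('q,'k::field) prep \<Rightarrow> ('p,'k) prep)
   \<Rightarrow> (('q,'k) prep \<Rightarrow> ('q,'k) prep \<Rightarrow> ('q,'k) pmor \<Rightarrow> ('p,'k) pmor) \<Rightarrow> bool" where
"left_adjoint_to_res Xq lrq Xp lrp i Lo Lm \<longleftrightarrow>
  is_functor Xq lrq Xp lrp Lo Lm \<and>
  (\<exists>\<phi> :: ('q,'k) prep \<Rightarrow> ('p,'k) prep \<Rightarrow> ('p,'k) pmor \<Rightarrow> ('q,'k) pmor.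
    (\<forall>M N. is_fp Xq lrq M \<and> is_fp Xp lrp N \<longrightarrow>
       bij_betw (\<phi> M N) {g. is_mor Xp lrp (Lo M) N g} {f. is_mor Xq lrq M (res_obj Xq lrq i N) f}) \<and>
    (\<forall>M M' N a g. is_fp Xq lrq M \<and> is_fp Xq lrq M' \<and> is_fp Xp lrp N \<and>
       is_mor Xq lrq M' M a \<and> is_mor Xp lrp (Lo M) N g \<longrightarrow>
       \<phi> M' N (comp_mor g (Lm M' M a)) = comp_mor (\<phi> M N g) a) \<and>
    (\<forall>M N N' b g. is_fp Xq lrq M \<and> is_fp Xp lrp N \<and> is_fp Xp lrp N' \<and>
       is_mor Xp lrp N N' b \<and> is_mor Xp lrp (Lo M) N g \<longrightarrow>
       \<phi> M N' (comp_mor b g) = comp_mor (res_mor Xq i b) (\<phi> M N g)))"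

definition exact_functor :: "'q set \<Rightarrow> ('q \<Rightarrow> 'q \<Rightarrow> bool) \<Rightarrow> 'p set \<Rightarrow> ('p \<Rightarrow> 'p \<Rightarrow> bool)
   \<Rightarrow> (('q,'k::field) prep \<Rightarrow> ('p,'k) prep)
   \<Rightarrow> (('q,'k) prep \<Rightarrow> ('q,'k) prep \<Rightarrow> ('q,'k) pmor \<Rightarrow> ('p,'k) pmor) \<Rightarrow> bool" where
"exact_functor X1 lr1 X2 lr2 Fo Fm \<longleftrightarrow>
  (\<forall>A B C f g. is_fp X1 lr1 A \<and> is_fp X1 lr1 B \<and> is_fp X1 lr1 C \<and>
     is_mor X1 lr1 A B f \<and> is_mor X1 lr1 B C g \<and> short_exact X1 f g \<longrightarrow>
     short_exact X2 (Fm A B f) (Fm B C g))"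

definition fully_faithful :: "'q set \<Rightarrow> ('q \<Rightarrow> 'q \<Rightarrow> bool) \<Rightarrow> 'p set \<Rightarrow> ('p \<Rightarrow> 'p \<Rightarrow> bool)
   \<Rightarrow> (('q,'k::field) prep \<Rightarrow> ('p,'k) prep)
   \<Rightarrow> (('q,'k) prep \<Rightarrow> ('q,'k) prep \<Rightarrow> ('q,'k) pmor \<Rightarrow> ('p,'k) pmor) \<Rightarrow> bool" where
"fully_faithful X1 lr1 X2 lr2 Fo Fm \<longleftrightarrow>
  (\<forall>M N. is_fp X1 lr1 M \<and> is_fp X1 lr1 N \<longrightarrow>
     bij_betw (Fm M N) {f. is_mor X1 lr1 M N f} {g. is_mor X2 lr2 (Fo M) (Fo N) g})"

definition preserves_spread_approx :: "'q set \<Rightarrow> ('q \<Rightarrow> 'q \<Rightarrow> bool) \<Rightarrow> 'p set \<Rightarrow> ('p \<Rightarrow> 'p \<Rightarrow> bool)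
   \<Rightarrow> (('q,'k::field) prep \<Rightarrow> ('p,'k) prep)
   \<Rightarrow> (('q,'k) prep \<Rightarrow> ('q,'k) prep \<Rightarrow> ('q,'k) pmor \<Rightarrow> ('p,'k) pmor) \<Rightarrow> bool" where
"preserves_spread_approx X1 lr1 X2 lr2 Fo Fm \<longleftrightarrow>
  (\<forall>C M f. spread_approx X1 lr1 C M f \<longrightarrow> spread_approx X2 lr2 (Fo C) (Fo M) (Fm C M f))"

end

theory Submission
  imports Defs "Jordan_Normal_Form.Matrix_Kernel"
begin

(* Since every chain Qs ! j is finite, each coordinate that lies above some value of the
   inclusion has a greatest such value below it. This gives a floor map from the up-closed
   set D generated by the image of the inclusion back to the small grid; it is right adjoint
   to the inclusion and a retraction of it. The left Kan extension of M is M composed with the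
   floor map on D, extended by zero. As a restriction along a monotone map it is exact and
   preserves finite presentations, the Galois connection gives the adjunction, and the
   retraction property gives full faithfulness.
   For spread-approximations: the Kan extension of the indicator of a spread is the indicator
   of its preimage, again a spread. A morphism from the indicator of a spread T into Lan M is
   constant on the fibres of the floor map and vanishes on fibres not saturated by T, so it
   factors through Lan of the indicator of a convex set S of the small grid. On the finite
   small grid every representation is finitely presented, and the lifting property of a
   spread-approximation extends from spreads to convex sets, one connected component at a
   time. *)

section \<open>Representations as families of matrices\<close>

lemma carrier_mat_degenerate_eq:
  fixes A B :: "'k::field mat"
  assumes "A \<in> carrier_mat r c" and "B \<in> carrier_mat r c" and "r = 0 \<or> c = 0"
  shows "A = B"
  by (rule eq_matI) (use assms in auto)

lemma one_mat_0 [simp]: "1\<^sub>m 0 = 0\<^sub>m 0 0"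
  by (rule eq_matI) auto

lemma mult_zero_inner_dim:
  assumes "A \<in> carrier_mat n 0" and "B \<in> carrier_mat 0 m"
  shows "A * B = 0\<^sub>m n m"
  by (rule eq_matI) (use assms in \<open>auto simp: scalar_prod_def\<close>)

lemma mult_zero_cols_eq:
  fixes A B C D :: "'k::field mat"
  assumes "A \<in> carrier_mat r n" and "B \<in> carrier_mat n 0" and "C \<in> carrier_mat r m" and "D \<in> carrier_mat m 0"
  shows "A * B = C * D"
  using assms by (intro carrier_mat_degenerate_eq[of _ r 0] mult_carrier_mat) auto

lemma mult_block_diag_mat:
  assumes "A1 \<in> carrier_mat a2 a1" and "B1 \<in> carrier_mat b2 b1"
    and "A2 \<in> carrier_mat a3 a2" and "B2 \<in> carrier_mat b3 b2"
  shows "four_block_mat A2 (0\<^sub>m a3 b2) (0\<^sub>m b3 a2) B2 * four_block_mat A1 (0\<^sub>m a2 b1) (0\<^sub>m b2 a1) B1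
     = four_block_mat (A2 * A1) (0\<^sub>m a3 b1) (0\<^sub>m b3 a1) (B2 * B1)"
  using assms by (subst mult_four_block_mat[of _ a3 a2 _ b2 _ b3]) auto

lemma mat_img_zero_cols: "mat_img (0\<^sub>m r 0 :: 'k::field mat) = {0\<^sub>v r}"
proof -
  have "0\<^sub>m r 0 *\<^sub>v v = 0\<^sub>v r" if "v \<in> carrier_vec 0" for v :: "'k vec"
    by (rule eq_vecI) (use that in \<open>simp_all add: scalar_prod_def\<close>)
  then show ?thesis unfolding mat_img_def by (auto intro!: exI[of _ "0\<^sub>v 0"])
qed

lemma mat_ker_zero_cols: "mat_ker (0\<^sub>m r 0 :: 'k::field mat) = {0\<^sub>v 0}"
  unfolding mat_ker_def by (auto intro!: eq_vecI)

lemma is_repD: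
  assumes "is_rep X lr M"
  shows "p \<notin> X \<Longrightarrow> fst M p = 0"
    and "\<not> (p \<in> X \<and> q \<in> X \<and> lr p q) \<Longrightarrow> snd M p q = 0\<^sub>m (fst M q) (fst M p)"
    and "p \<in> X \<Longrightarrow> snd M p p = 1\<^sub>m (fst M p)"
    and "p \<in> X \<Longrightarrow> q \<in> X \<Longrightarrow> s \<in> X \<Longrightarrow> lr p q \<Longrightarrow> lr q s \<Longrightarrow>
      snd M p s = snd M q s * snd M p q"
  using assms unfolding is_rep_def by blast+

lemma is_rep_carrier:
  assumes "is_rep X lr M"
  shows "snd M p q \<in> carrier_mat (fst M q) (fst M p)"
  using assms unfolding is_rep_def by (cases "p \<in> X \<and> q \<in> X \<and> lr p q") auto

lemma is_morD:
  assumes "is_mor X lr M N f"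
  shows "is_rep X lr M" and "is_rep X lr N"
    and "p \<notin> X \<Longrightarrow> f p = 0\<^sub>m (fst N p) (fst M p)"
    and "p \<in> X \<Longrightarrow> q \<in> X \<Longrightarrow> lr p q \<Longrightarrow> f q * snd M p q = snd N p q * f p"
  using assms unfolding is_mor_def by blast+

lemma is_mor_carrier:
  assumes "is_mor X lr M N f"
  shows "f p \<in> carrier_mat (fst N p) (fst M p)"
  using assms unfolding is_mor_def by (cases "p \<in> X") auto

lemma is_morI:
  assumes "is_rep X lr M" and "is_rep X lr N"
    and "\<And>p. p \<notin> X \<Longrightarrow> f p = 0\<^sub>m (fst N p) (fst M p)"
    and "\<And>p. p \<in> X \<Longrightarrow> f p \<in> carrier_mat (fst N p) (fst M p)"
    and "\<And>p q. p \<in> X \<Longrightarrow> q \<in> X \<Longrightarrow> lr p q \<Longrightarrow> f q * snd M p q = snd N p q * f p"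
  shows "is_mor X lr M N f"
  using assms unfolding is_mor_def by blast

lemma is_mor_comp:
  assumes f: "is_mor X lr M N f" and g: "is_mor X lr N L g"
  shows "is_mor X lr M L (comp_mor g f)"
proof (rule is_morI)
  show "is_rep X lr M" "is_rep X lr L" using is_morD f g by blast+
next
  fix p assume "p \<notin> X"
  then show "comp_mor g f p = 0\<^sub>m (fst L p) (fst M p)"
    using is_morD(3)[OF f] is_morD(3)[OF g] is_repD(1)[OF is_morD(2)[OF f]]
    by (simp add: comp_mor_def)
next
  fix p show "comp_mor g f p \<in> carrier_mat (fst L p) (fst M p)"
    using is_mor_carrier[OF f] is_mor_carrier[OF g] by (metis comp_mor_def mult_carrier_mat)
next
  fix p q assume pq: "p \<in> X" "q \<in> X" "lr p q"
  note carriers = is_mor_carrier[OF f] is_mor_carrier[OF g]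
    is_rep_carrier[OF is_morD(1)[OF f]] is_rep_carrier[OF is_morD(2)[OF f]]
    is_rep_carrier[OF is_morD(2)[OF g]]
  have "g q * f q * snd M p q = g q * (f q * snd M p q)" using carriers by (metis assoc_mult_mat)
  also have "\<dots> = g q * (snd N p q * f p)" using is_morD(4)[OF f pq] by simp
  also have "\<dots> = (g q * snd N p q) * f p" using carriers by (metis assoc_mult_mat)
  also have "\<dots> = (snd L p q * g p) * f p" using is_morD(4)[OF g pq] by simp
  also have "\<dots> = snd L p q * (g p * f p)" using carriers by (metis assoc_mult_mat)
  finally show "comp_mor g f q * snd M p q = snd L p q * comp_mor g f p"
    by (simp add: comp_mor_def)
qed

lemma comp_mor_assoc:
  assumes "is_mor X lr M N f" and "is_mor X lr N L g" and "is_mor X lr L K h"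
  shows "comp_mor h (comp_mor g f) = comp_mor (comp_mor h g) f"
  unfolding comp_mor_def
  using is_mor_carrier[OF assms(1)] is_mor_carrier[OF assms(2)] is_mor_carrier[OF assms(3)]
  by (intro ext) (metis assoc_mult_mat)

lemma is_rep_dsum:
  assumes M: "is_rep X lr M" and N: "is_rep X lr N"
  shows "is_rep X lr (dsum M N)"
  unfolding is_rep_def
proof (intro conjI allI impI ballI)
  fix p assume "p \<notin> X" then show "fst (dsum M N) p = 0"
    using is_repD(1)[OF M] is_repD(1)[OF N] by (simp add: dsum_def)
next
  fix p q assume "\<not> (p \<in> X \<and> q \<in> X \<and> lr p q)"
  then show "snd (dsum M N) p q = 0\<^sub>m (fst (dsum M N) q) (fst (dsum M N) p)"
    using is_repD(2)[OF M] is_repD(2)[OF N] by (simp add: dsum_def four_block_zero_mat)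
next
  fix p q show "snd (dsum M N) p q \<in> carrier_mat (fst (dsum M N) q) (fst (dsum M N) p)"
    using is_rep_carrier[OF M, of p q] is_rep_carrier[OF N, of p q]
    by (simp add: dsum_def four_block_carrier_mat)
next
  fix p assume "p \<in> X" then show "snd (dsum M N) p p = 1\<^sub>m (fst (dsum M N) p)"
    using is_repD(3)[OF M] is_repD(3)[OF N] by (simp add: dsum_def)
next
  fix p q s assume pqs: "p \<in> X" "q \<in> X" "s \<in> X" "lr p q \<and> lr q s"
  show "snd (dsum M N) p s = snd (dsum M N) q s * snd (dsum M N) p q"
    unfolding dsum_def snd_conv
    by (subst mult_block_diag_mat[OF is_rep_carrier[OF M] is_rep_carrier[OF N]
          is_rep_carrier[OF M] is_rep_carrier[OF N]])
       (use is_repD(4)[OF M pqs(1-3)] is_repD(4)[OF N pqs(1-3)] pqs(4) in simp)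
qed

lemma is_rep_zero: "is_rep X lr (zero_rep :: ('p, 'k::field) prep)"
  unfolding is_rep_def zero_rep_def by auto

lemma fst_indicator_rep: "fst (indicator_rep lr S) p = (if p \<in> S then 1 else 0)"
  by (simp add: indicator_rep_def)

lemma snd_indicator_rep: "snd (indicator_rep lr S) p q = (if p \<in> S \<and> q \<in> S \<and> lr p q then 1\<^sub>m 1
   else 0\<^sub>m (if q \<in> S then 1 else 0) (if p \<in> S then 1 else 0))"
  by (simp add: indicator_rep_def)

lemma indicator_rep_carrier:
  "snd (indicator_rep lr S) p q \<in> carrier_mat (fst (indicator_rep lr S) q) (fst (indicator_rep lr S) p)"
  by (simp add: indicator_rep_def)

lemma free_rep_Nil: "free_rep X lr [] = zero_rep"
  by (simp add: free_rep_def dsum_list_def)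

lemma free_rep_Cons:
  "free_rep X lr (a # as) = dsum (indicator_rep lr (upset X lr {a})) (free_rep X lr as)"
  by (simp add: free_rep_def dsum_list_def)

locale preordered_set =
  fixes X :: "'p set" and lr :: "'p \<Rightarrow> 'p \<Rightarrow> bool"
  assumes lr_refl: "\<And>x. x \<in> X \<Longrightarrow> lr x x"
    and lr_trans: "\<And>x y z. x \<in> X \<Longrightarrow> y \<in> X \<Longrightarrow> z \<in> X \<Longrightarrow> lr x y \<Longrightarrow> lr y z \<Longrightarrow> lr x z"
begin

lemma is_rep_indicator:
  assumes SX: "S \<subseteq> X" and cv: "convex_in X lr S"
  shows "is_rep X lr (indicator_rep lr S :: ('p, 'k::field) prep)"
  unfolding is_rep_def
proof (intro conjI allI impI ballI)
  let ?I = "indicator_rep lr S :: ('p, 'k) prep"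
  fix p
  show "p \<notin> X \<Longrightarrow> fst ?I p = 0" using SX by (auto simp: fst_indicator_rep)
  show "p \<in> X \<Longrightarrow> snd ?I p p = 1\<^sub>m (fst ?I p)" using lr_refl by (simp add: indicator_rep_def)
  fix q
  show "\<not> (p \<in> X \<and> q \<in> X \<and> lr p q) \<Longrightarrow> snd ?I p q = 0\<^sub>m (fst ?I q) (fst ?I p)"
    using SX by (auto simp: indicator_rep_def)
  show "snd ?I p q \<in> carrier_mat (fst ?I q) (fst ?I p)" by (rule indicator_rep_carrier)
  fix s assume pqs: "p \<in> X" "q \<in> X" "s \<in> X" "lr p q \<and> lr q s"
  show "snd ?I p s = snd ?I q s * snd ?I p q"
  proof (cases "p \<in> S \<and> s \<in> S")
    case True
    then have "q \<in> S" using cv pqs unfolding convex_in_def by blast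
    then show ?thesis using True pqs lr_trans[of p q s] by (simp add: snd_indicator_rep)
  next
    case False
    have "snd ?I q s * snd ?I p q \<in> carrier_mat (fst ?I s) (fst ?I p)"
      using indicator_rep_carrier by (metis mult_carrier_mat)
    then show ?thesis using False
      by (intro carrier_mat_degenerate_eq) (auto simp: indicator_rep_def)
  qed
qed

lemma convex_upset: "a \<in> X \<Longrightarrow> convex_in X lr (upset X lr {a})"
  unfolding convex_in_def upset_def using lr_trans by blast

lemma is_rep_free:
  assumes "set as \<subseteq> X"
  shows "is_rep X lr (free_rep X lr as :: ('p, 'k::field) prep)"
  using assms
proof (induct as)
  case Nil then show ?case using is_rep_zero by (simp add: free_rep_Nil)
next
  case (Cons a as)
  have "is_rep X lr (indicator_rep lr (upset X lr {a}) :: ('p, 'k) prep)"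
    using Cons.prems by (intro is_rep_indicator convex_upset) (auto simp: upset_def)
  then show ?case unfolding free_rep_Cons using Cons by (simp add: is_rep_dsum)
qed

end

section \<open>Restriction along a monotone map\<close>

lemma fst_res_obj: "fst (res_obj D lr \<phi> M) p = (if p \<in> D then fst M (\<phi> p) else 0)"
  by (simp add: res_obj_def Let_def)

lemma snd_res_obj: "snd (res_obj D lr \<phi> M) p q =
   (if p \<in> D \<and> q \<in> D \<and> lr p q then snd M (\<phi> p) (\<phi> q)
    else 0\<^sub>m (fst (res_obj D lr \<phi> M) q) (fst (res_obj D lr \<phi> M) p))"
  by (simp add: res_obj_def Let_def)

lemma res_mor_apply: "res_mor D \<phi> f p = (if p \<in> D then f (\<phi> p) else 0\<^sub>m 0 0)"
  by (simp add: res_mor_def)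

locale upclosed_restriction = preordered_set X1 lr1
  for X1 :: "'p set" and lr1 +
  fixes D :: "'p set" and \<phi> :: "'p \<Rightarrow> 'q" and X2 :: "'q set" and lr2
  assumes D_subset: "D \<subseteq> X1"
    and D_upclosed: "\<And>p p'. p \<in> D \<Longrightarrow> p' \<in> X1 \<Longrightarrow> lr1 p p' \<Longrightarrow> p' \<in> D"
    and maps_to: "\<And>p. p \<in> D \<Longrightarrow> \<phi> p \<in> X2"
    and monotone: "\<And>p p'. p \<in> D \<Longrightarrow> p' \<in> D \<Longrightarrow> lr1 p p' \<Longrightarrow> lr2 (\<phi> p) (\<phi> p')"
begin

abbreviation obj :: "('q, 'k::field) prep \<Rightarrow> ('p, 'k) prep" where
  "obj M \<equiv> res_obj D lr1 \<phi> M"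

abbreviation mor :: "('q, 'k::field) pmor \<Rightarrow> ('p, 'k) pmor" where
  "mor f \<equiv> res_mor D \<phi> f"

lemma is_rep_obj:
  assumes M: "is_rep X2 lr2 M"
  shows "is_rep X1 lr1 (obj M)"
  unfolding is_rep_def
proof (intro conjI allI impI ballI)
  have carrier: "snd (obj M) p q \<in> carrier_mat (fst (obj M) q) (fst (obj M) p)" for p q
    using is_rep_carrier[OF M] by (simp add: snd_res_obj fst_res_obj)
  fix p
  show "p \<notin> X1 \<Longrightarrow> fst (obj M) p = 0" using D_subset by (auto simp: fst_res_obj)
  show "p \<in> X1 \<Longrightarrow> snd (obj M) p p = 1\<^sub>m (fst (obj M) p)"
    using lr_refl maps_to is_repD(3)[OF M] by (simp add: snd_res_obj fst_res_obj)
  fix q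
  show "\<not> (p \<in> X1 \<and> q \<in> X1 \<and> lr1 p q) \<Longrightarrow> snd (obj M) p q = 0\<^sub>m (fst (obj M) q) (fst (obj M) p)"
    using D_subset by (auto simp: snd_res_obj)
  show "snd (obj M) p q \<in> carrier_mat (fst (obj M) q) (fst (obj M) p)" by (rule carrier)
  fix s assume pqs: "p \<in> X1" "q \<in> X1" "s \<in> X1" "lr1 p q \<and> lr1 q s"
  show "snd (obj M) p s = snd (obj M) q s * snd (obj M) p q"
  proof (cases "p \<in> D")
    case True
    then have "q \<in> D" "s \<in> D" "lr1 p s" using D_upclosed pqs lr_trans by blast+
    then show ?thesis using True pqs maps_to monotone is_repD(4)[OF M, of "\<phi> p" "\<phi> q" "\<phi> s"]
      by (simp add: snd_res_obj)
  next
    case False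
    then show ?thesis using carrier[of q s] carrier[of p q]
      by (intro carrier_mat_degenerate_eq[OF carrier] mult_carrier_mat) (auto simp: fst_res_obj)
  qed
qed

lemma is_mor_mor:
  assumes f: "is_mor X2 lr2 M N f"
  shows "is_mor X1 lr1 (obj M) (obj N) (mor f)"
proof (rule is_morI)
  show "is_rep X1 lr1 (obj M)" "is_rep X1 lr1 (obj N)" using is_rep_obj is_morD(1,2)[OF f] by blast+
  fix p
  show "p \<notin> X1 \<Longrightarrow> mor f p = 0\<^sub>m (fst (obj N) p) (fst (obj M) p)"
    using D_subset by (auto simp: res_mor_apply fst_res_obj)
  have carrier: "mor f p \<in> carrier_mat (fst (obj N) p) (fst (obj M) p)" for p
    using is_mor_carrier[OF f] by (simp add: res_mor_apply fst_res_obj)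
  then show "mor f p \<in> carrier_mat (fst (obj N) p) (fst (obj M) p)" .
  fix q assume pq: "p \<in> X1" "q \<in> X1" "lr1 p q"
  show "mor f q * snd (obj M) p q = snd (obj N) p q * mor f p"
  proof (cases "p \<in> D")
    case True
    then have "q \<in> D" using D_upclosed pq by blast
    then show ?thesis using True pq maps_to monotone is_morD(4)[OF f, of "\<phi> p" "\<phi> q"]
      by (simp add: snd_res_obj res_mor_apply)
  next
    case False
    have "mor f q * snd (obj M) p q \<in> carrier_mat (fst (obj N) q) 0"
      "snd (obj N) p q * mor f p \<in> carrier_mat (fst (obj N) q) 0"
      using False carrier is_rep_carrier[OF is_rep_obj[OF is_morD(1)[OF f]]]
        is_rep_carrier[OF is_rep_obj[OF is_morD(2)[OF f]]]
      by (metis fst_res_obj mult_carrier_mat)+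
    then show ?thesis by (rule carrier_mat_degenerate_eq) simp
  qed
qed

lemma mor_id:
  assumes "is_rep X2 lr2 M"
  shows "mor (id_mor X2 M) = id_mor X1 (obj M)"
  using D_subset maps_to by (auto simp: res_mor_apply id_mor_def fst_res_obj intro!: ext)

lemma mor_comp: "mor (comp_mor g f) = comp_mor (mor g) (mor f)"
  by (auto simp: res_mor_apply comp_mor_def)

lemma is_iso_mor:
  assumes "is_iso X2 lr2 A B u"
  shows "is_iso X1 lr1 (obj A) (obj B) (mor u)"
proof -
  obtain v where u: "is_mor X2 lr2 A B u" and v: "is_mor X2 lr2 B A v"
    and vu: "comp_mor v u = id_mor X2 A" and uv: "comp_mor u v = id_mor X2 B"
    using assms unfolding is_iso_def by blast
  show ?thesis unfolding is_iso_def
    using is_mor_mor[OF u] is_mor_mor[OF v] mor_id[OF is_morD(1)[OF u]] mor_id[OF is_morD(2)[OF u]]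
    by (metis mor_comp vu uv)
qed

lemma obj_dsum: "obj (dsum M N) = dsum (obj M) (obj N)"
proof (rule prod_eqI)
  show "fst (obj (dsum M N)) = fst (dsum (obj M) (obj N))"
    by (rule ext) (simp add: fst_res_obj dsum_def)
  have "snd (obj (dsum M N)) p q = snd (dsum (obj M) (obj N)) p q" for p q
  proof (cases "p \<in> D \<and> q \<in> D \<and> lr1 p q")
    case False
    then show ?thesis
      unfolding dsum_def snd_conv snd_res_obj[of _ _ _ M] snd_res_obj[of _ _ _ N] if_not_P[OF False]
      by (simp add: snd_res_obj fst_res_obj dsum_def four_block_zero_mat)
  qed (simp add: snd_res_obj fst_res_obj dsum_def)
  then show "snd (obj (dsum M N)) = snd (dsum (obj M) (obj N))" by (intro ext)
qed

lemma obj_dsum_list: "obj (dsum_list Ms) = dsum_list (map obj Ms)"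
proof -
  have "obj zero_rep = zero_rep" unfolding zero_rep_def by (auto simp: res_obj_def Let_def intro!: ext)
  then show ?thesis unfolding dsum_list_def by (induct Ms) (auto simp: obj_dsum)
qed

lemma obj_indicator: "obj (indicator_rep lr2 S) = indicator_rep lr1 {p \<in> D. \<phi> p \<in> S}"
  by (rule prod_eqI) (use monotone in \<open>auto simp: fst_res_obj snd_res_obj indicator_rep_def intro!: ext\<close>)

lemma short_exact_mor:
  assumes "short_exact X2 f g"
  shows "short_exact X1 (mor f) (mor g)"
  using assms maps_to
  by (auto simp: short_exact_def res_mor_apply mat_img_zero_cols mat_ker_zero_cols)

lemma is_fp_obj:
  assumes free: "\<And>a. a \<in> X2 \<Longrightarrow> {p \<in> D. \<phi> p \<in> upset X2 lr2 {a}} = upset X1 lr1 {\<psi> a}"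
    and \<psi>: "\<And>a. a \<in> X2 \<Longrightarrow> \<psi> a \<in> X1"
    and fp: "is_fp X2 lr2 M"
  shows "is_fp X1 lr1 (obj M)"
proof -
  from fp obtain as bs h e where as: "set as \<subseteq> X2" and bs: "set bs \<subseteq> X2"
    and h: "is_mor X2 lr2 (free_rep X2 lr2 as) (free_rep X2 lr2 bs) h"
    and e: "is_mor X2 lr2 (free_rep X2 lr2 bs) M e"
    and exact: "\<forall>p\<in>X2. mat_img (h p) = mat_ker (e p) \<and> mat_img (e p) = carrier_vec (fst M p)"
    unfolding is_fp_def by blast
  have obj_free: "obj (free_rep X2 lr2 cs) = free_rep X1 lr1 (map \<psi> cs)" if "set cs \<subseteq> X2" for cs
    unfolding free_rep_def obj_dsum_list map_map
    by (rule arg_cong[where f=dsum_list], rule map_cong) (use that in \<open>auto simp: obj_indicator free\<close>)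
  show ?thesis unfolding is_fp_def
  proof (intro conjI exI)
    show "is_rep X1 lr1 (obj M)" using fp is_rep_obj unfolding is_fp_def by blast
    show "set (map \<psi> as) \<subseteq> X1" "set (map \<psi> bs) \<subseteq> X1" using as bs \<psi> by auto
    show "is_mor X1 lr1 (free_rep X1 lr1 (map \<psi> as)) (free_rep X1 lr1 (map \<psi> bs)) (mor h)"
      using is_mor_mor[OF h] by (simp only: obj_free[OF as] obj_free[OF bs])
    show "is_mor X1 lr1 (free_rep X1 lr1 (map \<psi> bs)) (obj M) (mor e)"
      using is_mor_mor[OF e] by (simp only: obj_free[OF bs])
    show "\<forall>p\<in>X1. mat_img (mor h p) = mat_ker (mor e p) \<and> mat_img (mor e p) = carrier_vec (fst (obj M) p)"
      using exact maps_to
      by (auto simp: res_mor_apply fst_res_obj mat_img_zero_cols mat_ker_zero_cols)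
  qed
qed

end

section \<open>Finite presentation over a finite preorder\<close>

abbreviation vspan :: "nat \<Rightarrow> 'k::field vec set \<Rightarrow> 'k vec set" where
  "vspan n \<equiv> LinearCombinations.module.span class_ring (module_vec TYPE('k) n)"

lemma mat_img_mat_of_cols:
  fixes ws :: "'k::field vec list"
  assumes ws: "set ws \<subseteq> carrier_vec n"
  shows "mat_img (mat_of_cols n ws) = vspan n (set ws)"
proof -
  interpret V: vec_space "TYPE('k)" n .
  have dims: "\<forall>w\<in>set ws. dim_vec w = n" using ws by auto
  have "mat_img (mat_of_cols n ws) = {V.lincomb_list c ws | c. True}"
  proof (intro equalityI subsetI)
    fix w assume "w \<in> mat_img (mat_of_cols n ws)"
    then obtain v where v: "v \<in> carrier_vec (length ws)" and w: "w = mat_of_cols n ws *\<^sub>v v"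
      unfolding mat_img_def by auto
    have "vec (length ws) (\<lambda>i. v $ i) = v" using v by (auto intro!: eq_vecI)
    then have "w = V.lincomb_list (\<lambda>i. v $ i) ws"
      using V.lincomb_list_as_mat_mult[OF dims, of "\<lambda>i. v $ i"] w by simp
    then show "w \<in> {V.lincomb_list c ws | c. True}" by blast
  next
    fix w assume "w \<in> {V.lincomb_list c ws | c. True}"
    then obtain c where "w = V.lincomb_list c ws" by blast
    then have "w = mat_of_cols n ws *\<^sub>v vec (length ws) c"
      using V.lincomb_list_as_mat_mult[OF dims] by simp
    then show "w \<in> mat_img (mat_of_cols n ws)" unfolding mat_img_def by auto
  qed
  also have "\<dots> = V.span_list ws" unfolding V.span_list_def by auto
  also have "\<dots> = vspan n (set ws)" by (rule V.span_list_as_span[OF ws])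
  finally show ?thesis .
qed

lemma mat_ker_eq_span:
  fixes A :: "'k::field mat"
  assumes A: "A \<in> carrier_mat r c"
  shows "\<exists>L. set L \<subseteq> carrier_vec c \<and> mat_ker A = vspan c (set L)"
proof -
  obtain B where "finite B" and basis: "kernel.basis c A B"
    using kernel_basis_exists[OF A] by blast
  interpret K: kernel r c A by unfold_locales (rule A)
  obtain L where L: "set L = B" using finite_list[OF \<open>finite B\<close>] by blast
  have "B \<subseteq> mat_kernel A" and "K.Ker.span B = mat_kernel A"
    using basis unfolding K.Ker.basis_def by auto
  then show ?thesis
    using K.span_same L A by (intro exI[of _ L]) (auto simp: mat_ker_def mat_kernel_def)
qed

lemma mat_of_cols_append:
  assumes "set xs \<subseteq> carrier_vec n" and "set ys \<subseteq> carrier_vec n"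
  shows "mat_of_cols n (xs @ ys) =
    four_block_mat (mat_of_cols n xs) (mat_of_cols n ys) (0\<^sub>m 0 (length xs)) (0\<^sub>m 0 (length ys))"
  by (rule eq_matI) (auto simp: mat_of_cols_index nth_append)

lemma mult_mat_of_cols_single:
  assumes "A \<in> carrier_mat n m" and "w \<in> carrier_vec m"
  shows "A * mat_of_cols m [w] = mat_of_cols n [A *\<^sub>v w]"
  by (rule eq_matI) (use assms in \<open>auto simp: mat_of_cols_index scalar_prod_def col_def\<close>)

lemma mult_row_block_mat:
  assumes "T \<in> carrier_mat r' r" and "A \<in> carrier_mat r c1" and "B \<in> carrier_mat r c2"
  shows "T * four_block_mat A B (0\<^sub>m 0 c1) (0\<^sub>m 0 c2) = four_block_mat (T * A) (T * B) (0\<^sub>m 0 c1) (0\<^sub>m 0 c2)"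
proof -
  have "T = four_block_mat T (0\<^sub>m r' 0) (0\<^sub>m 0 r) (0\<^sub>m 0 0)"
    using assms by (auto intro!: eq_matI)
  then have "T * four_block_mat A B (0\<^sub>m 0 c1) (0\<^sub>m 0 c2) =
     four_block_mat T (0\<^sub>m r' 0) (0\<^sub>m 0 r) (0\<^sub>m 0 0) * four_block_mat A B (0\<^sub>m 0 c1) (0\<^sub>m 0 c2)"
    by simp
  also have "\<dots> = four_block_mat (T * A) (T * B) (0\<^sub>m 0 c1) (0\<^sub>m 0 c2)"
    using assms by (subst mult_four_block_mat[of _ r' r _ 0 _ 0]) auto
  finally show ?thesis .
qed

lemma row_block_mat_mult_block_diag_mat:
  assumes "A' \<in> carrier_mat r c1'" and "B' \<in> carrier_mat r c2'"
    and "I \<in> carrier_mat c1' c1" and "F \<in> carrier_mat c2' c2"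
  shows "four_block_mat A' B' (0\<^sub>m 0 c1') (0\<^sub>m 0 c2') * four_block_mat I (0\<^sub>m c1' c2) (0\<^sub>m c2' c1) F
     = four_block_mat (A' * I) (B' * F) (0\<^sub>m 0 c1) (0\<^sub>m 0 c2)"
  using assms by (subst mult_four_block_mat[of _ r c1' _ c2' _ 0]) auto

text \<open>A generator of \<open>N\<close> is a pair of a point \<open>x\<close> and a vector of \<open>N\<close> at \<open>x\<close>.\<close>

definition generator_images :: "'p set \<Rightarrow> ('p \<Rightarrow> 'p \<Rightarrow> bool) \<Rightarrow> ('p,'k::field) prep
    \<Rightarrow> ('p \<times> 'k vec) list \<Rightarrow> 'p \<Rightarrow> 'k vec list" where
  "generator_images X lr N gs z =
    map (\<lambda>(x, v). snd N x z *\<^sub>v v) (filter (\<lambda>(x, v). z \<in> upset X lr {x}) gs)"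

definition generator_map :: "'p set \<Rightarrow> ('p \<Rightarrow> 'p \<Rightarrow> bool) \<Rightarrow> ('p,'k::field) prep
    \<Rightarrow> ('p \<times> 'k vec) list \<Rightarrow> ('p,'k) pmor" where
  "generator_map X lr N gs z = mat_of_cols (fst N z) (generator_images X lr N gs z)"

lemma generator_images_carrier:
  fixes N :: "('p, 'k::field) prep"
  assumes "is_rep X lr N"
  shows "set (generator_images X lr N gs z) \<subseteq> carrier_vec (fst N z)"
proof -
  have "dim_row (snd N x z) = fst N z" for x using is_rep_carrier[OF assms] by (rule carrier_matD)
  then show ?thesis by (auto simp: generator_images_def carrier_dim_vec)
qed

lemma length_generator_images:
  fixes N :: "('p, 'k::field) prep"
  shows "length (generator_images X lr N gs z) = fst (free_rep X lr (map fst gs) :: ('p, 'k) prep) z"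
proof (induct gs)
  case Nil
  then show ?case by (simp add: generator_images_def free_rep_Nil zero_rep_def)
next
  case (Cons g gs)
  then show ?case
    by (cases g) (simp add: generator_images_def free_rep_Cons dsum_def fst_indicator_rep)
qed

lemma generator_map_carrier:
  fixes N :: "('p, 'k::field) prep"
  shows "generator_map X lr N gs z \<in> carrier_mat (fst N z) (fst (free_rep X lr (map fst gs) :: ('p,'k) prep) z)"
  unfolding generator_map_def length_generator_images[of X lr N, symmetric] by simp

lemma generator_map_single_carrier:
  fixes N :: "('p, 'k::field) prep"
  shows "generator_map X lr N [g] z \<in> carrier_mat (fst N z) (fst (indicator_rep lr (upset X lr {fst g}) :: ('p,'k) prep) z)"
  using generator_map_carrier[of X lr N "[g]" z] by (simp add: free_rep_Cons free_rep_Nil dsum_def zero_rep_def)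

lemma generator_map_Cons:
  fixes N :: "('p, 'k::field) prep"
  assumes "is_rep X lr N"
  shows "generator_map X lr N (g # gs) z = four_block_mat (generator_map X lr N [g] z)
    (generator_map X lr N gs z) (0\<^sub>m 0 (fst (indicator_rep lr (upset X lr {fst g}) :: ('p,'k) prep) z))
    (0\<^sub>m 0 (fst (free_rep X lr (map fst gs) :: ('p,'k) prep) z))"
proof -
  let ?n = "fst N z" and ?I = "generator_images X lr N"
  have "?I (g # gs) z = ?I [g] z @ ?I gs z" by (simp add: generator_images_def)
  then have "generator_map X lr N (g # gs) z = mat_of_cols ?n (?I [g] z @ ?I gs z)"
    by (simp only: generator_map_def)
  also have "\<dots> = four_block_mat (mat_of_cols ?n (?I [g] z)) (mat_of_cols ?n (?I gs z))
      (0\<^sub>m 0 (length (?I [g] z))) (0\<^sub>m 0 (length (?I gs z)))"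
    by (rule mat_of_cols_append; rule generator_images_carrier[OF assms])
  also have "length (?I [g] z) = fst (indicator_rep lr (upset X lr {fst g}) :: ('p,'k) prep) z"
    by (simp add: generator_images_def fst_indicator_rep split_beta)
  finally show ?thesis by (simp only: generator_map_def length_generator_images)
qed

context preordered_set
begin

lemma generator_map_single_natural:
  fixes N :: "('p, 'k::field) prep"
  assumes N: "is_rep X lr N" and x: "x \<in> X" and zz: "z \<in> X" "z' \<in> X" "lr z z'"
    and v: "v \<in> carrier_vec (fst N x)"
  shows "generator_map X lr N [(x, v)] z' * snd (indicator_rep lr (upset X lr {x}) :: ('p,'k) prep) z z'
     = snd N z z' * generator_map X lr N [(x, v)] z"
proof (cases "z \<in> upset X lr {x}")
  case True
  then have xz: "lr x z" by (auto simp: upset_def)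
  then have "z' \<in> upset X lr {x}" using lr_trans[OF x zz(1) zz(2) xz zz(3)] zz by (auto simp: upset_def)
  moreover have "snd N x z' *\<^sub>v v = snd N z z' *\<^sub>v (snd N x z *\<^sub>v v)"
    using is_repD(4)[OF N x zz(1) zz(2) xz zz(3)]
      assoc_mult_mat_vec[OF is_rep_carrier[OF N] is_rep_carrier[OF N] v] by simp
  ultimately show ?thesis
    using True zz mult_mat_of_cols_single[OF is_rep_carrier[OF N] mult_mat_vec_carrier[OF is_rep_carrier[OF N] v]]
    by (simp add: generator_map_def generator_images_def snd_indicator_rep)
next
  case False
  let ?I = "indicator_rep lr (upset X lr {x}) :: ('p,'k) prep"
  have c: "generator_map X lr N [(x, v)] y \<in> carrier_mat (fst N y) (fst ?I y)" for y
    using generator_map_single_carrier[of X lr N "(x, v)" y] by simp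
  have "generator_map X lr N [(x, v)] z' * snd ?I z z' \<in> carrier_mat (fst N z') (fst ?I z)"
    by (rule mult_carrier_mat[OF c indicator_rep_carrier])
  moreover have "snd N z z' * generator_map X lr N [(x, v)] z \<in> carrier_mat (fst N z') (fst ?I z)"
    by (rule mult_carrier_mat[OF is_rep_carrier[OF N] c])
  moreover have "fst ?I z = 0" using False by (simp add: fst_indicator_rep)
  ultimately show ?thesis by (intro carrier_mat_degenerate_eq) auto
qed

lemma generator_map_natural:
  fixes N :: "('p, 'k::field) prep"
  assumes N: "is_rep X lr N" and gs: "\<forall>(x, v)\<in>set gs. x \<in> X \<and> v \<in> carrier_vec (fst N x)"
    and zz: "z \<in> X" "z' \<in> X" "lr z z'"
  shows "generator_map X lr N gs z' * snd (free_rep X lr (map fst gs) :: ('p,'k) prep) z z'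
    = snd N z z' * generator_map X lr N gs z"
  using gs
proof (induct gs)
  case Nil
  have "generator_map X lr N [] y = 0\<^sub>m (fst N y) 0" for y
    by (rule eq_matI) (auto simp: generator_map_def generator_images_def)
  then show ?case using is_rep_carrier[OF N, of z z'] by (simp add: free_rep_Nil zero_rep_def)
next
  case (Cons g gs)
  obtain x v where g: "g = (x, v)" by fastforce
  then have x: "x \<in> X" and v: "v \<in> carrier_vec (fst N x)" and gs: "\<forall>(x, v)\<in>set gs. x \<in> X"
    using Cons.prems by auto
  let ?I = "indicator_rep lr (upset X lr {x}) :: ('p,'k) prep"
  let ?F = "free_rep X lr (map fst gs) :: ('p,'k) prep"
  let ?G = "generator_map X lr N"
  have F: "is_rep X lr ?F" by (rule is_rep_free) (use gs in auto)
  have cg: "?G [g] y \<in> carrier_mat (fst N y) (fst ?I y)" for y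
    using generator_map_single_carrier[of X lr N g y] g by simp
  note cgs = generator_map_carrier[of X lr N gs]
  have "?G (g # gs) z' * snd (free_rep X lr (map fst (g # gs)) :: ('p,'k) prep) z z'
    = four_block_mat (?G [g] z') (?G gs z') (0\<^sub>m 0 (fst ?I z')) (0\<^sub>m 0 (fst ?F z'))
      * four_block_mat (snd ?I z z') (0\<^sub>m (fst ?I z') (fst ?F z)) (0\<^sub>m (fst ?F z') (fst ?I z)) (snd ?F z z')"
    using generator_map_Cons[OF N, of g gs z'] g by (simp add: free_rep_Cons dsum_def)
  also have "\<dots> = four_block_mat (?G [g] z' * snd ?I z z') (?G gs z' * snd ?F z z')
      (0\<^sub>m 0 (fst ?I z)) (0\<^sub>m 0 (fst ?F z))"
    by (rule row_block_mat_mult_block_diag_mat[OF cg cgs indicator_rep_carrier is_rep_carrier[OF F]])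
  also have "\<dots> = four_block_mat (snd N z z' * ?G [g] z) (snd N z z' * ?G gs z)
      (0\<^sub>m 0 (fst ?I z)) (0\<^sub>m 0 (fst ?F z))"
    using generator_map_single_natural[OF N x zz v] Cons.hyps Cons.prems g by simp
  also have "\<dots> = snd N z z' * ?G (g # gs) z"
    using generator_map_Cons[OF N, of g gs z] g mult_row_block_mat[OF is_rep_carrier[OF N] cg cgs] by simp
  finally show ?case .
qed

lemma is_mor_generator_map:
  fixes N :: "('p, 'k::field) prep"
  assumes N: "is_rep X lr N" and gs: "\<forall>(x, v)\<in>set gs. x \<in> X \<and> v \<in> carrier_vec (fst N x)"
  shows "is_mor X lr (free_rep X lr (map fst gs)) N (generator_map X lr N gs)"
proof (rule is_morI)
  show "is_rep X lr (free_rep X lr (map fst gs))" by (rule is_rep_free) (use gs in auto)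
  show "is_rep X lr N" by (rule N)
next
  fix p assume "p \<notin> X"
  then show "generator_map X lr N gs p = 0\<^sub>m (fst N p) (fst (free_rep X lr (map fst gs) :: ('p,'k) prep) p)"
    using is_repD(1)[OF N] generator_map_carrier[of X lr N gs p]
    by (intro carrier_mat_degenerate_eq[of _ 0]) auto
next
  fix p
  show "generator_map X lr N gs p \<in> carrier_mat (fst N p) (fst (free_rep X lr (map fst gs) :: ('p,'k) prep) p)"
    by (rule generator_map_carrier)
next
  fix z z' assume "z \<in> X" "z' \<in> X" "lr z z'"
  then show "generator_map X lr N gs z' * snd (free_rep X lr (map fst gs) :: ('p,'k) prep) z z'
    = snd N z z' * generator_map X lr N gs z"
    by (rule generator_map_natural[OF N gs])
qed

lemma exists_generator_map:
  fixes N :: "('p, 'k::field) prep" and L :: "'p \<Rightarrow> 'k vec list"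
  assumes X: "finite X" and N: "is_rep X lr N"
    and L: "\<And>z. z \<in> X \<Longrightarrow> set (L z) \<subseteq> carrier_vec (fst N z)"
    and closed: "\<And>x z v. x \<in> X \<Longrightarrow> z \<in> X \<Longrightarrow> lr x z \<Longrightarrow> v \<in> set (L x) \<Longrightarrow>
      snd N x z *\<^sub>v v \<in> vspan (fst N z) (set (L z))"
  shows "\<exists>gs. set (map fst gs) \<subseteq> X \<and> is_mor X lr (free_rep X lr (map fst gs)) N (generator_map X lr N gs) \<and>
    (\<forall>z\<in>X. mat_img (generator_map X lr N gs z) = vspan (fst N z) (set (L z)))"
proof -
  obtain xs where xs: "set xs = X" using finite_list[OF X] by blast
  define gs where "gs = concat (map (\<lambda>x. map (Pair x) (L x)) xs)"
  have gs_set: "set gs = {(x, v). x \<in> X \<and> v \<in> set (L x)}" unfolding gs_def using xs by auto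
  have img: "mat_img (generator_map X lr N gs z) = vspan (fst N z) (set (L z))" if z: "z \<in> X" for z
  proof -
    interpret V: vec_space "TYPE('k)" "fst N z" .
    let ?W = "set (generator_images X lr N gs z)"
    have "set (L z) \<subseteq> ?W"
    proof
      fix v assume v: "v \<in> set (L z)"
      then have "snd N z z *\<^sub>v v = v" using is_repD(3)[OF N z] L[OF z] by auto
      moreover have "z \<in> upset X lr {z}" using z lr_refl by (auto simp: upset_def)
      ultimately show "v \<in> ?W"
        unfolding generator_images_def set_map set_filter using v z gs_set
        by (intro image_eqI[of _ _ "(z, v)"]) auto
    qed
    moreover have "?W \<subseteq> vspan (fst N z) (set (L z))"
      using closed z gs_set by (auto simp: generator_images_def upset_def)
    ultimately have "vspan (fst N z) ?W = vspan (fst N z) (set (L z))"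
      using V.span_subsetI[OF L[OF z]] V.span_is_monotone by blast
    then show ?thesis
      unfolding generator_map_def by (simp add: mat_img_mat_of_cols generator_images_carrier[OF N])
  qed
  have "is_mor X lr (free_rep X lr (map fst gs)) N (generator_map X lr N gs)"
    using gs_set L by (intro is_mor_generator_map[OF N]) auto
  then show ?thesis using img gs_set by (intro exI[of _ gs]) auto
qed

end

lemma is_mor_maps_mat_ker:
  assumes f: "is_mor X lr M N f" and xz: "x \<in> X" "z \<in> X" "lr x z" and v: "v \<in> mat_ker (f x)"
  shows "snd M x z *\<^sub>v v \<in> mat_ker (f z)"
proof -
  have c: "f x \<in> carrier_mat (fst N x) (fst M x)" "f z \<in> carrier_mat (fst N z) (fst M z)"
    "snd M x z \<in> carrier_mat (fst M z) (fst M x)" "snd N x z \<in> carrier_mat (fst N z) (fst N x)"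
    using is_mor_carrier[OF f] is_rep_carrier[OF is_morD(1)[OF f]] is_rep_carrier[OF is_morD(2)[OF f]]
    by blast+
  have vc: "v \<in> carrier_vec (fst M x)" and v0: "f x *\<^sub>v v = 0\<^sub>v (fst N x)"
    using v c unfolding mat_ker_def by auto
  have "f z *\<^sub>v (snd M x z *\<^sub>v v) = (f z * snd M x z) *\<^sub>v v" using c vc by simp
  also have "\<dots> = (snd N x z * f x) *\<^sub>v v" using is_morD(4)[OF f xz] by simp
  also have "\<dots> = snd N x z *\<^sub>v 0\<^sub>v (fst N x)" using v0 c vc by simp
  also have "\<dots> = 0\<^sub>v (fst N z)" using c by (auto intro!: eq_vecI simp: scalar_prod_def)
  finally show ?thesis unfolding mat_ker_def using c vc by auto
qed

lemma (in preordered_set) is_fp_of_finite: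
  fixes N :: "('p, 'k::field) prep"
  assumes X: "finite X" and N: "is_rep X lr N"
  shows "is_fp X lr N"
proof -
  have "\<exists>gs. set (map fst gs) \<subseteq> X \<and> is_mor X lr (free_rep X lr (map fst gs)) N (generator_map X lr N gs) \<and>
    (\<forall>z\<in>X. mat_img (generator_map X lr N gs z) = vspan (fst N z) (set (unit_vecs (fst N z))))"
  proof (rule exists_generator_map[OF X N])
    fix x z and v :: "'k vec"
    have "snd N x z *\<^sub>v v \<in> carrier_vec (fst N z)"
      using is_rep_carrier[OF N] by (metis carrier_dim_vec carrier_matD(1) dim_mult_mat_vec)
    then show "snd N x z *\<^sub>v v \<in> vspan (fst N z) (set (unit_vecs (fst N z)))"
      using vec_space.span_unit_vecs_is_carrier by metis
  qed (rule unit_vecs_carrier)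
  then obtain gs1 where gs1: "set (map fst gs1) \<subseteq> X"
    and e: "is_mor X lr (free_rep X lr (map fst gs1)) N (generator_map X lr N gs1)"
    and e_onto: "\<forall>z\<in>X. mat_img (generator_map X lr N gs1 z) = carrier_vec (fst N z)"
    using vec_space.span_unit_vecs_is_carrier by metis
  define F where "F = (free_rep X lr (map fst gs1) :: ('p,'k) prep)"
  define e where "e = generator_map X lr N gs1"
  have F: "is_rep X lr F" and e_mor: "is_mor X lr F N e" using e is_morD(1) unfolding F_def e_def by blast+
  obtain L where L: "\<And>z. set (L z) \<subseteq> carrier_vec (fst F z) \<and> mat_ker (e z) = vspan (fst F z) (set (L z))"
    using mat_ker_eq_span[OF is_mor_carrier[OF e_mor]] by metis
  have "\<exists>gs. set (map fst gs) \<subseteq> X \<and> is_mor X lr (free_rep X lr (map fst gs)) F (generator_map X lr F gs) \<and>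
    (\<forall>z\<in>X. mat_img (generator_map X lr F gs z) = vspan (fst F z) (set (L z)))"
  proof (rule exists_generator_map[OF X F])
    fix x z v assume xz: "x \<in> X" "z \<in> X" "lr x z" and v: "v \<in> set (L x)"
    interpret V: vec_space "TYPE('k)" "fst F x" .
    have "v \<in> mat_ker (e x)" using L[of x] V.in_own_span v by auto
    then show "snd F x z *\<^sub>v v \<in> vspan (fst F z) (set (L z))"
      using is_mor_maps_mat_ker[OF e_mor xz] L by auto
  qed (use L in auto)
  then obtain gs2 where "set (map fst gs2) \<subseteq> X"
    and "is_mor X lr (free_rep X lr (map fst gs2)) F (generator_map X lr F gs2)"
    and "\<forall>z\<in>X. mat_img (generator_map X lr F gs2 z) = mat_ker (e z)"
    using L by metis
  then show ?thesis
    unfolding is_fp_def using N gs1 e_mor e_onto unfolding F_def e_def by blast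
qed

section \<open>Connected components of convex sets\<close>

context preordered_set
begin

definition component :: "'p set \<Rightarrow> 'p \<Rightarrow> 'p set" where
  "component S x = {y \<in> S. (\<lambda>a b. a \<in> S \<and> b \<in> S \<and> (lr a b \<or> lr b a))\<^sup>*\<^sup>* x y}"

lemma component_self: "x \<in> S \<Longrightarrow> x \<in> component S x"
  by (simp add: component_def)

lemma component_subset: "component S x \<subseteq> S"
  by (auto simp: component_def)

lemma component_closed: "a \<in> component S x \<Longrightarrow> b \<in> S \<Longrightarrow> lr a b \<or> lr b a \<Longrightarrow> b \<in> component S x"
  unfolding component_def by (auto intro: rtranclp.rtrancl_into_rtrancl)

lemma component_eq:
  assumes "y \<in> component S x"
  shows "component S y = component S x"
proof -
  let ?R = "\<lambda>a b. a \<in> S \<and> b \<in> S \<and> (lr a b \<or> lr b a)"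
  have xy: "?R\<^sup>*\<^sup>* x y" using assms by (simp add: component_def)
  have "symp ?R\<^sup>*\<^sup>*" by (rule symp_rtranclp) (auto simp: symp_def)
  then have yx: "?R\<^sup>*\<^sup>* y x" using xy by (rule sympD)
  show ?thesis unfolding component_def using rtranclp_trans[OF xy] rtranclp_trans[OF yx] by blast
qed

lemma convex_component:
  assumes "convex_in X lr S"
  shows "convex_in X lr (component S x)"
  unfolding convex_in_def
proof (intro ballI impI)
  fix a b z assume a: "a \<in> component S x" and b: "b \<in> component S x" and z: "z \<in> X"
    and le: "lr a z \<and> lr z b"
  then have "z \<in> S" using assms component_subset unfolding convex_in_def by blast
  then show "z \<in> component S x" using component_closed[OF a] le by blast
qed

lemma connected_component:
  assumes x: "x \<in> S"
  shows "connected_in lr (component S x)"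
  unfolding connected_in_def
proof (intro conjI ballI)
  show "component S x \<noteq> {}" using component_self[OF x] by blast
  let ?K = "\<lambda>a b. a \<in> component S x \<and> b \<in> component S x \<and> (lr a b \<or> lr b a)"
  have from_x: "?K\<^sup>*\<^sup>* x y" if "y \<in> component S x" for y
  proof -
    have "(\<lambda>a b. a \<in> S \<and> b \<in> S \<and> (lr a b \<or> lr b a))\<^sup>*\<^sup>* x y" using that by (simp add: component_def)
    then show ?thesis
    proof (induct rule: rtranclp_induct)
      case (step y z)
      then have y: "y \<in> component S x" unfolding component_def by auto
      then have "?K y z" using component_closed[OF y] step(2) by blast
      then show ?case using step(3) by (rule rtranclp.rtrancl_into_rtrancl[rotated])
    qed simp
  qed
  have K_sym: "?K\<inverse>\<inverse> = ?K" by (auto simp: fun_eq_iff)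
  show "?K\<^sup>*\<^sup>* a b" if "a \<in> component S x" "b \<in> component S x" for a b
  proof -
    have "?K\<inverse>\<inverse>\<^sup>*\<^sup>* a x" using from_x[OF that(1)] by (rule rtranclp_converseI)
    then have "?K\<^sup>*\<^sup>* a x" by (simp only: K_sym)
    then show ?thesis using from_x[OF that(2)] by (rule rtranclp_trans)
  qed
qed

lemma spread_component:
  assumes "S \<subseteq> X" and "convex_in X lr S" and "x \<in> S"
  shows "spread X lr (component S x)"
  using assms component_subset[of S x] convex_component[OF assms(2)] connected_component[OF assms(3)]
  unfolding spread_def by blast

lemma is_mor_from_indicatorI:
  fixes M :: "('p, 'k::field) prep"
  assumes SX: "S \<subseteq> X" and cv: "convex_in X lr S" and M: "is_rep X lr M"
    and v: "\<And>q. q \<in> S \<Longrightarrow> v q \<in> carrier_mat (fst M q) 1"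
    and compatible: "\<And>q q'. q \<in> S \<Longrightarrow> q' \<in> S \<Longrightarrow> lr q q' \<Longrightarrow> v q' = snd M q q' * v q"
    and exit: "\<And>q q'. q \<in> S \<Longrightarrow> q' \<in> X \<Longrightarrow> q' \<notin> S \<Longrightarrow> lr q q' \<Longrightarrow> snd M q q' * v q = 0\<^sub>m (fst M q') 1"
  shows "is_mor X lr (indicator_rep lr S) M (\<lambda>q. if q \<in> S then v q else 0\<^sub>m (fst M q) 0)"
    (is "is_mor _ _ ?I _ ?v")
proof (rule is_morI[OF is_rep_indicator[OF SX cv] M])
  have carrier: "?v q \<in> carrier_mat (fst M q) (fst ?I q)" for q
    using v by (simp add: fst_indicator_rep)
  fix q
  show "?v q \<in> carrier_mat (fst M q) (fst ?I q)" by (rule carrier)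
  show "q \<notin> X \<Longrightarrow> ?v q = 0\<^sub>m (fst M q) (fst ?I q)" using SX by (auto simp: fst_indicator_rep)
  fix q' assume qq: "q \<in> X" "q' \<in> X" "lr q q'"
  show "?v q' * snd ?I q q' = snd M q q' * ?v q"
  proof (cases "q \<in> S")
    case False
    show ?thesis
      by (rule mult_zero_cols_eq[OF carrier _ is_rep_carrier[OF M]])
        (use False indicator_rep_carrier[of lr S q q'] carrier[of q] in \<open>simp_all add: fst_indicator_rep\<close>)
  next
    case True
    show ?thesis
    proof (cases "q' \<in> S")
      case True2: True
      then show ?thesis
        using True qq(3) compatible[OF True True2 qq(3)] right_mult_one_mat[OF v[OF True2]]
        by (simp add: snd_indicator_rep)
    next
      case False
      have "?v q' * snd ?I q q' = 0\<^sub>m (fst M q') 1"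
        using True False by (intro mult_zero_inner_dim) (auto simp: snd_indicator_rep)
      then show ?thesis using True False exit qq by simp
    qed
  qed
qed

lemma is_mor_from_indicatorD:
  fixes M :: "('p, 'k::field) prep"
  assumes SX: "S \<subseteq> X" and g: "is_mor X lr (indicator_rep lr S) M g"
  shows "q \<in> S \<Longrightarrow> g q \<in> carrier_mat (fst M q) 1"
    and "q \<in> S \<Longrightarrow> q' \<in> S \<Longrightarrow> lr q q' \<Longrightarrow> g q' = snd M q q' * g q"
    and "q \<in> S \<Longrightarrow> q' \<in> X \<Longrightarrow> q' \<notin> S \<Longrightarrow> lr q q' \<Longrightarrow> snd M q q' * g q = 0\<^sub>m (fst M q') 1"
proof -
  show carrier: "g q \<in> carrier_mat (fst M q) 1" if "q \<in> S" for q
    using is_mor_carrier[OF g, of q] that by (simp add: fst_indicator_rep)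
  show "q \<in> S \<Longrightarrow> q' \<in> S \<Longrightarrow> lr q q' \<Longrightarrow> g q' = snd M q q' * g q"
    using is_morD(4)[OF g, of q q'] SX carrier[of q'] by (auto simp: snd_indicator_rep)
  assume q: "q \<in> S" and q': "q' \<in> X" "q' \<notin> S" "lr q q'"
  have "g q' * snd (indicator_rep lr S :: ('p, 'k) prep) q q' = 0\<^sub>m (fst M q') 1"
    using is_mor_carrier[OF g, of q'] q q' by (intro mult_zero_inner_dim) (auto simp: fst_indicator_rep snd_indicator_rep)
  then show "snd M q q' * g q = 0\<^sub>m (fst M q') 1"
    using is_morD(4)[OF g, of q q'] q q' SX by auto
qed

lemma is_mor_restrict_component:
  fixes M :: "('p, 'k::field) prep"
  assumes SX: "S \<subseteq> X" and cv: "convex_in X lr S" and x: "x \<in> S"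
    and g: "is_mor X lr (indicator_rep lr S) M g"
  shows "is_mor X lr (indicator_rep lr (component S x)) M
    (\<lambda>q. if q \<in> component S x then g q else 0\<^sub>m (fst M q) 0)"
proof (rule is_mor_from_indicatorI)
  note KS = component_subset[of S x] and D = is_mor_from_indicatorD[OF SX g]
  show "component S x \<subseteq> X" "convex_in X lr (component S x)" using KS SX convex_component[OF cv] by blast+
  show "is_rep X lr M" by (rule is_morD(2)[OF g])
  fix q assume q: "q \<in> component S x"
  show "g q \<in> carrier_mat (fst M q) 1" using D(1) q KS by blast
  fix q'
  show "q' \<in> component S x \<Longrightarrow> lr q q' \<Longrightarrow> g q' = snd M q q' * g q" using D(2) q KS by blast
  show "q' \<in> X \<Longrightarrow> q' \<notin> component S x \<Longrightarrow> lr q q' \<Longrightarrow> snd M q q' * g q = 0\<^sub>m (fst M q') 1"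
    using D(3) q KS component_closed[OF q] by blast
qed

lemma is_mor_glue_components:
  fixes C :: "('p, 'k::field) prep"
  assumes SX: "S \<subseteq> X" and cv: "convex_in X lr S" and C: "is_rep X lr C"
    and h: "\<And>x. x \<in> S \<Longrightarrow> is_mor X lr (indicator_rep lr (component S x)) C (h (component S x))"
  shows "is_mor X lr (indicator_rep lr S) C (\<lambda>q. if q \<in> S then h (component S q) q else 0\<^sub>m (fst C q) 0)"
proof (rule is_mor_from_indicatorI[OF SX cv C])
  have KX: "component S x \<subseteq> X" for x using component_subset SX by blast
  note D = is_mor_from_indicatorD[OF KX h]
  fix q assume q: "q \<in> S"
  then have qK: "q \<in> component S q" by (rule component_self)
  show "h (component S q) q \<in> carrier_mat (fst C q) 1" using D(1)[OF q qK] .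
  fix q'
  show "q' \<in> S \<Longrightarrow> lr q q' \<Longrightarrow> h (component S q') q' = snd C q q' * h (component S q) q"
    using D(2)[OF q qK] component_closed[OF qK] component_eq by metis
  show "q' \<in> X \<Longrightarrow> q' \<notin> S \<Longrightarrow> lr q q' \<Longrightarrow> snd C q q' * h (component S q) q = 0\<^sub>m (fst C q') 1"
    using D(3)[OF q qK] component_subset by blast
qed

lemma lift_from_convex:
  fixes M C :: "('p, 'k::field) prep"
  assumes X: "finite X" and SX: "S \<subseteq> X" and cv: "convex_in X lr S"
    and g: "is_mor X lr (indicator_rep lr S) M g"
    and f: "is_mor X lr C M f"
    and lift: "\<And>K g. spread X lr K \<Longrightarrow> is_fp X lr (indicator_rep lr K :: ('p, 'k) prep) \<Longrightarrow>
      is_mor X lr (indicator_rep lr K) M g \<Longrightarrow> \<exists>h. is_mor X lr (indicator_rep lr K) C h \<and> comp_mor f h = g"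
  shows "\<exists>h. is_mor X lr (indicator_rep lr S) C h \<and> comp_mor f h = g"
proof -
  define g_on where "g_on K q = (if q \<in> K then g q else 0\<^sub>m (fst M q) 0)" for K q
  have "\<forall>K\<in>component S ` S. \<exists>h. is_mor X lr (indicator_rep lr K) C h \<and> comp_mor f h = g_on K"
  proof
    fix K assume "K \<in> component S ` S"
    then obtain x where x: "x \<in> S" and K: "K = component S x" by blast
    show "\<exists>h. is_mor X lr (indicator_rep lr K) C h \<and> comp_mor f h = g_on K"
      unfolding K
    proof (rule lift)
      show "spread X lr (component S x)" by (rule spread_component[OF SX cv x])
      then show "is_fp X lr (indicator_rep lr (component S x) :: ('p, 'k) prep)"
        by (intro is_fp_of_finite[OF X] is_rep_indicator) (auto simp: spread_def)
      show "is_mor X lr (indicator_rep lr (component S x)) M (g_on (component S x))"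
        unfolding g_on_def by (rule is_mor_restrict_component[OF SX cv x g])
    qed
  qed
  then obtain h where h: "\<And>x. x \<in> S \<Longrightarrow> is_mor X lr (indicator_rep lr (component S x)) C (h (component S x))
    \<and> comp_mor f (h (component S x)) = g_on (component S x)"
    by (metis bchoice image_eqI)
  let ?h = "\<lambda>q. if q \<in> S then h (component S q) q else 0\<^sub>m (fst C q) 0"
  have h_mor: "is_mor X lr (indicator_rep lr S) C ?h"
    using is_mor_glue_components[OF SX cv is_morD(1)[OF f]] h by blast
  have "comp_mor f ?h q = g q" for q
  proof (cases "q \<in> S")
    case True
    then show ?thesis
      using fun_cong[OF conjunct2[OF h[OF True]], of q] component_self[OF True]
      by (simp add: comp_mor_def g_on_def)
  next
    case False
    then show ?thesis
      using mult_carrier_mat[OF is_mor_carrier[OF f] is_mor_carrier[OF h_mor, of q]] is_mor_carrier[OF g, of q]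
      by (intro carrier_mat_degenerate_eq) (auto simp: comp_mor_def fst_indicator_rep)
  qed
  then show ?thesis using h_mor by blast
qed

end

section \<open>Grids and the floor map\<close>

lemma grid_le_iff: "grid_le xs ys \<longleftrightarrow> length xs = length ys \<and> (\<forall>j<length xs. xs ! j \<le> ys ! j)"
  unfolding grid_le_def by (simp add: list_all2_conv_all_nth)

lemma grid_le_refl: "grid_le xs xs" by (simp add: grid_le_iff)
lemma grid_le_trans: "grid_le xs ys \<Longrightarrow> grid_le ys zs \<Longrightarrow> grid_le xs zs"
  unfolding grid_le_iff by (metis order_trans)

lemma mem_grid: "xs \<in> grid Ps \<longleftrightarrow> length xs = length Ps \<and> (\<forall>j<length Ps. xs ! j \<in> Ps ! j)"
  by (simp add: grid_def)

definition grid_join :: "'a::linorder list \<Rightarrow> 'a list \<Rightarrow> 'a list" where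
  "grid_join xs ys = map (\<lambda>(x,y). max x y) (zip xs ys)"

lemma length_grid_join[simp]: "length (grid_join xs ys) = min (length xs) (length ys)"
  by (simp add: grid_join_def)
lemma nth_grid_join: "j < length xs \<Longrightarrow> j < length ys \<Longrightarrow> grid_join xs ys ! j = max (xs ! j) (ys ! j)"
  by (simp add: grid_join_def)
lemma grid_join_in_grid: "xs \<in> grid Ps \<Longrightarrow> ys \<in> grid Ps \<Longrightarrow> grid_join xs ys \<in> grid Ps"
  unfolding mem_grid by (auto simp: nth_grid_join max_def)
lemma grid_le_join1: "length xs = length ys \<Longrightarrow> grid_le xs (grid_join xs ys)"
  by (simp add: grid_le_iff nth_grid_join)
lemma grid_le_join2: "length xs = length ys \<Longrightarrow> grid_le ys (grid_join xs ys)"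
  by (simp add: grid_le_iff nth_grid_join)
lemma grid_join_eq_right: "grid_le xs ys \<Longrightarrow> grid_join xs ys = ys"
  by (rule nth_equalityI) (auto simp: grid_le_iff nth_grid_join max_def)

locale finite_aligned_grid =
  fixes Ps :: "'a::linorder set list" and Qs :: "'b::linorder set list" and \<iota>s :: "('b \<Rightarrow> 'a) list"
  assumes aligned: "aligned_grid_inclusion Qs Ps \<iota>s"
    and finite_Qs: "\<forall>j<length Qs. finite (Qs ! j)"
begin

abbreviation "n \<equiv> length Ps"
abbreviation "XP \<equiv> grid Ps"
abbreviation "XQ \<equiv> grid Qs"
abbreviation "incl \<equiv> grid_map \<iota>s"

lemma length_Qs: "length Qs = n" and length_\<iota>s: "length \<iota>s = n"
  using aligned unfolding aligned_grid_inclusion_def by auto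

lemma coord_inj: "j < n \<Longrightarrow> inj_on (\<iota>s ! j) (Qs ! j)"
  and coord_maps_to: "j < n \<Longrightarrow> a \<in> Qs ! j \<Longrightarrow> (\<iota>s ! j) a \<in> Ps ! j"
  and coord_mono: "j < n \<Longrightarrow> a \<in> Qs ! j \<Longrightarrow> b \<in> Qs ! j \<Longrightarrow> a \<le> b \<Longrightarrow> (\<iota>s ! j) a \<le> (\<iota>s ! j) b"
  using aligned unfolding aligned_grid_inclusion_def mono_on_def by auto

lemma finite_coord: "j < n \<Longrightarrow> finite (Qs ! j)" using finite_Qs length_Qs by auto

lemma coord_le_iff: "j < n \<Longrightarrow> a \<in> Qs ! j \<Longrightarrow> b \<in> Qs ! j \<Longrightarrow> (\<iota>s ! j) a \<le> (\<iota>s ! j) b \<longleftrightarrow> a \<le> b"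
proof
  assume j: "j < n" and a: "a \<in> Qs ! j" and b: "b \<in> Qs ! j" and le: "(\<iota>s ! j) a \<le> (\<iota>s ! j) b"
  show "a \<le> b"
  proof (rule ccontr)
    assume "\<not> a \<le> b"
    then have "b \<le> a" by simp
    then have "(\<iota>s ! j) b \<le> (\<iota>s ! j) a" using coord_mono[OF j b a] by blast
    then have "(\<iota>s ! j) a = (\<iota>s ! j) b" using le by simp
    then have "a = b" using coord_inj[OF j] a b by (simp add: inj_on_eq_iff)
    then show False using \<open>\<not> a \<le> b\<close> by simp
  qed
qed (rule coord_mono)

definition floor_coord :: "nat \<Rightarrow> 'a \<Rightarrow> 'b" where
  "floor_coord j x = Max {a \<in> Qs ! j. (\<iota>s ! j) a \<le> x}"

definition floor_dom :: "'a list set" where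
  "floor_dom = {p \<in> grid Ps. \<forall>j<n. \<exists>a\<in>Qs ! j. (\<iota>s ! j) a \<le> p ! j}"

definition grid_floor :: "'a list \<Rightarrow> 'b list" where
  "grid_floor p = map (\<lambda>j. floor_coord j (p ! j)) [0..<n]"

lemma
  assumes j: "j < n" and ex: "\<exists>a\<in>Qs ! j. (\<iota>s ! j) a \<le> x"
  shows floor_coord_in: "floor_coord j x \<in> Qs ! j"
    and incl_floor_coord_le: "(\<iota>s ! j) (floor_coord j x) \<le> x"
    and le_floor_coord_iff: "a \<in> Qs ! j \<Longrightarrow> (\<iota>s ! j) a \<le> x \<longleftrightarrow> a \<le> floor_coord j x"
proof -
  let ?S = "{a \<in> Qs ! j. (\<iota>s ! j) a \<le> x}"
  have fS: "finite ?S" using finite_coord[OF j] by auto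
  have nS: "?S \<noteq> {}" using ex by auto
  have "floor_coord j x \<in> ?S" unfolding floor_coord_def using Max_in[OF fS nS] .
  then show 1: "floor_coord j x \<in> Qs ! j" "(\<iota>s ! j) (floor_coord j x) \<le> x" by auto
  assume a: "a \<in> Qs ! j"
  show "(\<iota>s ! j) a \<le> x \<longleftrightarrow> a \<le> floor_coord j x"
  proof
    assume "(\<iota>s ! j) a \<le> x" then show "a \<le> floor_coord j x" unfolding floor_coord_def using fS a by auto
  next
    assume "a \<le> floor_coord j x"
    then have "(\<iota>s ! j) a \<le> (\<iota>s ! j) (floor_coord j x)" using coord_mono[OF j a 1(1)] by blast
    then show "(\<iota>s ! j) a \<le> x" using 1(2) by order
  qed
qed

lemma floor_coord_mono:
  assumes j: "j < n" and ex: "\<exists>a\<in>Qs ! j. (\<iota>s ! j) a \<le> x" and xy: "x \<le> y"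
  shows "floor_coord j x \<le> floor_coord j y"
proof -
  have ey: "\<exists>a\<in>Qs ! j. (\<iota>s ! j) a \<le> y" using ex xy by (meson order_trans)
  show ?thesis using floor_coord_in[OF j ex] floor_coord_in[OF j ey] incl_floor_coord_le[OF j ex] incl_floor_coord_le[OF j ey] le_floor_coord_iff[OF j ex] le_floor_coord_iff[OF j ey] xy by (meson order_trans)
qed

lemma floor_coord_max:
  assumes j: "j < n" and ex: "\<exists>a\<in>Qs ! j. (\<iota>s ! j) a \<le> x" and ey: "\<exists>a\<in>Qs ! j. (\<iota>s ! j) a \<le> y"
  shows "floor_coord j (max x y) = max (floor_coord j x) (floor_coord j y)"
  using floor_coord_mono[OF j ex, of y] floor_coord_mono[OF j ey, of x] by (auto simp: max_def)

lemma floor_coord_incl: assumes j: "j < n" and a: "a \<in> Qs ! j" shows "floor_coord j ((\<iota>s ! j) a) = a"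
proof -
  have ex: "\<exists>aa\<in>Qs ! j. (\<iota>s ! j) aa \<le> (\<iota>s ! j) a" using a by blast
  have 1: "floor_coord j ((\<iota>s ! j) a) \<le> a"
    using floor_coord_in[OF j ex] incl_floor_coord_le[OF j ex] coord_le_iff[OF j floor_coord_in[OF j ex] a] by blast
  have 2: "a \<le> floor_coord j ((\<iota>s ! j) a)" using le_floor_coord_iff[OF j ex a] by simp
  show ?thesis using 1 2 by simp
qed

lemma length_incl[simp]: "length (incl q) = n"
  by (simp add: grid_map_def length_\<iota>s)
lemma nth_incl: "j < n \<Longrightarrow> incl q ! j = (\<iota>s ! j) (q ! j)"
  by (simp add: grid_map_def length_\<iota>s)
lemma length_grid_floor[simp]: "length (grid_floor p) = n" by (simp add: grid_floor_def)
lemma nth_grid_floor: "j < n \<Longrightarrow> grid_floor p ! j = floor_coord j (p ! j)" by (simp add: grid_floor_def)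

lemma mem_XQ: "q \<in> XQ \<longleftrightarrow> length q = n \<and> (\<forall>j<n. q ! j \<in> Qs ! j)"
  by (simp add: grid_def length_Qs)

lemma floor_dom_subset: "floor_dom \<subseteq> XP" by (auto simp: floor_dom_def)

lemma incl_in_floor_dom: "q \<in> XQ \<Longrightarrow> incl q \<in> floor_dom"
  unfolding floor_dom_def mem_grid mem_XQ length_Qs by (auto simp: nth_incl coord_maps_to)

lemma incl_in_XP: "q \<in> XQ \<Longrightarrow> incl q \<in> XP" using incl_in_floor_dom floor_dom_subset by blast

lemma floor_domD: "p \<in> floor_dom \<Longrightarrow> j < n \<Longrightarrow> \<exists>a\<in>Qs ! j. (\<iota>s ! j) a \<le> p ! j"
  by (auto simp: floor_dom_def)

lemma grid_floor_in_XQ: "p \<in> floor_dom \<Longrightarrow> grid_floor p \<in> XQ"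
  unfolding mem_XQ using floor_domD floor_coord_in by (auto simp: nth_grid_floor)

lemma incl_le_iff_le_grid_floor:
  assumes p: "p \<in> floor_dom" and q: "q \<in> XQ"
  shows "grid_le (incl q) p \<longleftrightarrow> grid_le q (grid_floor p)"
proof -
  have lp: "length p = n" using p floor_dom_subset mem_grid by blast
  have lq: "length q = n" using q mem_XQ by blast
  show ?thesis unfolding grid_le_iff using lp lq le_floor_coord_iff[OF _ floor_domD[OF p]] q
    by (auto simp: nth_incl nth_grid_floor mem_XQ)
qed

lemma grid_floor_incl: "q \<in> XQ \<Longrightarrow> grid_floor (incl q) = q"
  by (rule nth_equalityI) (auto simp: mem_XQ nth_grid_floor nth_incl floor_coord_incl)

lemma incl_mono: "q \<in> XQ \<Longrightarrow> q' \<in> XQ \<Longrightarrow> grid_le q q' \<Longrightarrow> grid_le (incl q) (incl q')"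
  unfolding grid_le_iff mem_XQ by (auto simp: nth_incl coord_mono)

lemma grid_floor_mono: assumes "p \<in> floor_dom" "p' \<in> floor_dom" "grid_le p p'" shows "grid_le (grid_floor p) (grid_floor p')"
proof -
  have l: "length p' = n" using assms floor_dom_subset mem_grid by blast
  show ?thesis using assms l unfolding grid_le_iff by (auto simp: nth_grid_floor intro!: floor_coord_mono floor_domD)
qed

lemma floor_dom_upclosed: "p \<in> floor_dom \<Longrightarrow> p' \<in> XP \<Longrightarrow> grid_le p p' \<Longrightarrow> p' \<in> floor_dom"
  unfolding floor_dom_def grid_le_iff by (auto simp: mem_grid) (meson order_trans)

lemma incl_grid_floor_le: "p \<in> floor_dom \<Longrightarrow> grid_le (incl (grid_floor p)) p"
  using incl_le_iff_le_grid_floor[OF _ grid_floor_in_XQ] grid_le_refl by blast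

lemma grid_floor_join:
  assumes "p \<in> floor_dom" "p' \<in> floor_dom"
  shows "grid_floor (grid_join p p') = grid_join (grid_floor p) (grid_floor p')"
proof -
  have l: "length p = n" "length p' = n" using assms floor_dom_subset mem_grid by blast+
  show ?thesis
  proof (rule nth_equalityI)
    show "length (grid_floor (grid_join p p')) = length (grid_join (grid_floor p) (grid_floor p'))" by simp
    fix j assume "j < length (grid_floor (grid_join p p'))"
    then have j: "j < n" by simp
    have "grid_floor (grid_join p p') ! j = floor_coord j (max (p ! j) (p' ! j))"
      using j l by (simp add: nth_grid_floor nth_grid_join)
    also have "\<dots> = max (floor_coord j (p ! j)) (floor_coord j (p' ! j))"
      by (rule floor_coord_max[OF j floor_domD[OF assms(1) j] floor_domD[OF assms(2) j]])
    also have "\<dots> = grid_join (grid_floor p) (grid_floor p') ! j" using j by (simp add: nth_grid_floor nth_grid_join)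
    finally show "grid_floor (grid_join p p') ! j = grid_join (grid_floor p) (grid_floor p') ! j" .
  qed
qed

lemma grid_join_in_floor_dom: assumes "p \<in> floor_dom" "p' \<in> XP" shows "grid_join p p' \<in> floor_dom"
proof -
  have p: "p \<in> XP" using assms floor_dom_subset by blast
  then have l: "length p = length p'" using assms mem_grid by metis
  show ?thesis by (rule floor_dom_upclosed[OF assms(1) grid_join_in_grid[OF p assms(2)] grid_le_join1[OF l]])
qed

lemma grid_floor_join_incl:
  assumes "p \<in> floor_dom" "q' \<in> XQ" "grid_le (grid_floor p) q'"
  shows "grid_floor (grid_join p (incl q')) = q'"
  using grid_floor_join[OF assms(1) incl_in_floor_dom[OF assms(2)]] grid_floor_incl[OF assms(2)] grid_join_eq_right[OF assms(3)]
  by simp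

lemma finite_XQ: "finite XQ"
proof -
  have "XQ \<subseteq> {xs. set xs \<subseteq> (\<Union>j<n. Qs ! j) \<and> length xs = n}"
    using mem_XQ by (auto simp: in_set_conv_nth) (metis lessThan_iff)
  moreover have "finite {xs. set xs \<subseteq> (\<Union>j<n. Qs ! j) \<and> length xs = n}"
    by (rule finite_lists_length_eq) (use finite_coord in auto)
  ultimately show ?thesis by (rule finite_subset)
qed

lemma floor_preimage_upset: "a \<in> XQ \<Longrightarrow> {p \<in> floor_dom. grid_floor p \<in> upset XQ grid_le {a}} = upset XP grid_le {incl a}"
proof
  assume a: "a \<in> XQ"
  show "{p \<in> floor_dom. grid_floor p \<in> upset XQ grid_le {a}} \<subseteq> upset XP grid_le {incl a}"
    unfolding upset_def using incl_le_iff_le_grid_floor[OF _ a] floor_dom_subset by blast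
  show "upset XP grid_le {incl a} \<subseteq> {p \<in> floor_dom. grid_floor p \<in> upset XQ grid_le {a}}"
  proof
    fix p assume "p \<in> upset XP grid_le {incl a}"
    then have p: "p \<in> XP" "grid_le (incl a) p" unfolding upset_def by auto
    have pD: "p \<in> floor_dom" by (rule floor_dom_upclosed[OF incl_in_floor_dom[OF a] p(1) p(2)])
    show "p \<in> {p \<in> floor_dom. grid_floor p \<in> upset XQ grid_le {a}}"
      unfolding upset_def using pD grid_floor_in_XQ[OF pD] incl_le_iff_le_grid_floor[OF pD a] p(2) by blast
  qed
qed

end

sublocale finite_aligned_grid \<subseteq> P: preordered_set XP grid_le
  by unfold_locales (auto simp: grid_le_refl intro: grid_le_trans)

sublocale finite_aligned_grid \<subseteq> Q: preordered_set XQ grid_le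
  by unfold_locales (auto simp: grid_le_refl intro: grid_le_trans)

section \<open>The left Kan extension\<close>

sublocale finite_aligned_grid \<subseteq> Lan: upclosed_restriction XP grid_le floor_dom grid_floor XQ grid_le
  by unfold_locales
    (auto simp: grid_floor_in_XQ grid_floor_mono grid_le_refl floor_dom_subset[THEN subsetD]
      intro: floor_dom_upclosed grid_le_trans)

sublocale finite_aligned_grid \<subseteq> Res: upclosed_restriction XQ grid_le XQ incl XP grid_le
  by unfold_locales (auto simp: incl_in_XP incl_mono grid_le_refl intro: grid_le_trans)

context finite_aligned_grid
begin

abbreviation incl_floor :: "'a list \<Rightarrow> 'a list" where
  "incl_floor p \<equiv> incl (grid_floor p)"

lemma Res_obj_Lan_obj:
  assumes M: "is_rep XQ grid_le M"
  shows "Res.obj (Lan.obj M) = M"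
proof (rule prod_eqI)
  show fst_eq: "fst (Res.obj (Lan.obj M)) = fst M"
    using is_repD(1)[OF M] incl_in_floor_dom grid_floor_incl by (auto simp: fst_res_obj)
  have "snd (Res.obj (Lan.obj M)) q q' = snd M q q'" for q q'
  proof (cases "q \<in> XQ \<and> q' \<in> XQ \<and> grid_le q q'")
    case True
    then show ?thesis using incl_in_floor_dom incl_mono grid_floor_incl by (simp add: snd_res_obj)
  next
    case False
    then show ?thesis using is_repD(2)[OF M False] fst_eq by (simp only: snd_res_obj[of XQ] if_False)
  qed
  then show "snd (Res.obj (Lan.obj M)) = snd M" by (intro ext)
qed

lemma is_fp_Lan_obj: "is_fp XQ grid_le M \<Longrightarrow> is_fp XP grid_le (Lan.obj M)"
  by (rule Lan.is_fp_obj[OF floor_preimage_upset incl_in_XP])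

lemma is_functor_Lan: "is_functor XQ grid_le XP grid_le Lan.obj (\<lambda>M N f. Lan.mor f)"
  unfolding is_functor_def using is_fp_Lan_obj Lan.is_mor_mor Lan.mor_id Lan.mor_comp is_fp_def by blast

lemma snd_Lan_obj_incl_floor:
  assumes M: "is_rep XQ grid_le M" and p: "p \<in> floor_dom"
  shows "snd (Lan.obj M) (incl_floor p) p = 1\<^sub>m (fst M (grid_floor p))"
  using p incl_grid_floor_le[OF p] grid_floor_incl grid_floor_in_XQ[OF p] incl_in_floor_dom
    is_repD(3)[OF M grid_floor_in_XQ[OF p]]
  by (simp add: snd_res_obj)

text \<open>The inverse of the adjunction bijection \<open>g \<mapsto> Res.mor g\<close>: a morphism \<open>f : M \<rightarrow> Res N\<close>
  is transported from \<open>incl_floor p\<close> up to \<open>p\<close>.\<close>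

definition Lan_transpose :: "('a list, 'k::field) prep \<Rightarrow> ('b list, 'k) pmor \<Rightarrow> ('a list, 'k) pmor" where
  "Lan_transpose N f p =
    (if p \<in> floor_dom then snd N (incl_floor p) p * f (grid_floor p) else 0\<^sub>m (fst N p) 0)"

lemma Lan_transpose_carrier:
  assumes N: "is_rep XP grid_le N" and f: "is_mor XQ grid_le M (Res.obj N) f"
  shows "Lan_transpose N f p \<in> carrier_mat (fst N p) (fst (Lan.obj M) p)"
  using is_mor_carrier[OF f, of "grid_floor p"] grid_floor_in_XQ is_rep_carrier[OF N, of "incl_floor p" p]
  by (auto simp: Lan_transpose_def fst_res_obj intro: mult_carrier_mat)

lemma Lan_transpose_natural:
  assumes M: "is_rep XQ grid_le M" and N: "is_rep XP grid_le N" and f: "is_mor XQ grid_le M (Res.obj N) f"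
    and p: "p \<in> floor_dom" and q: "q \<in> XP" and pq: "grid_le p q"
  shows "Lan_transpose N f q * snd (Lan.obj M) p q = snd N p q * Lan_transpose N f p"
proof -
  let ?p = "grid_floor p" and ?q = "grid_floor q"
  have qD: "q \<in> floor_dom" using floor_dom_upclosed[OF p q pq] .
  have fp: "?p \<in> XQ" "?q \<in> XQ" using p qD grid_floor_in_XQ by blast+
  have fpq: "grid_le ?p ?q" using grid_floor_mono p qD pq by blast
  have ip: "incl ?p \<in> XP" "incl ?q \<in> XP" using fp incl_in_XP by blast+
  have pX: "p \<in> XP" using p floor_dom_subset by blast
  have cf: "f ?p \<in> carrier_mat (fst N (incl ?p)) (fst M ?p)" "f ?q \<in> carrier_mat (fst N (incl ?q)) (fst M ?q)"
    using is_mor_carrier[OF f, of ?p] is_mor_carrier[OF f, of ?q] fp by (simp_all add: fst_res_obj)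
  note cM = is_rep_carrier[OF M] and cN = is_rep_carrier[OF N]
  have f_natural: "f ?q * snd M ?p ?q = snd N (incl ?p) (incl ?q) * f ?p"
    using is_morD(4)[OF f fp fpq] fp fpq by (simp add: snd_res_obj)
  have "Lan_transpose N f q * snd (Lan.obj M) p q = snd N (incl ?q) q * f ?q * snd M ?p ?q"
    using p qD pq by (simp add: Lan_transpose_def snd_res_obj)
  also have "\<dots> = snd N (incl ?q) q * (snd N (incl ?p) (incl ?q) * f ?p)"
    by (simp add: assoc_mult_mat[OF cN cf(2) cM] f_natural)
  also have "\<dots> = (snd N (incl ?q) q * snd N (incl ?p) (incl ?q)) * f ?p"
    by (simp add: assoc_mult_mat[OF cN cN cf(1)])
  also have "snd N (incl ?q) q * snd N (incl ?p) (incl ?q) = snd N p q * snd N (incl ?p) p"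
    using is_repD(4)[OF N ip q incl_mono[OF fp fpq] incl_grid_floor_le[OF qD]]
      is_repD(4)[OF N ip(1) pX q incl_grid_floor_le[OF p] pq] by simp
  also have "\<dots> * f ?p = snd N p q * Lan_transpose N f p"
    using p cf cN by (simp add: Lan_transpose_def assoc_mult_mat[OF cN cN cf(1)])
  finally show ?thesis .
qed

lemma is_mor_Lan_transpose:
  assumes M: "is_rep XQ grid_le M" and N: "is_rep XP grid_le N" and f: "is_mor XQ grid_le M (Res.obj N) f"
  shows "is_mor XP grid_le (Lan.obj M) N (Lan_transpose N f)"
proof (rule is_morI[OF Lan.is_rep_obj[OF M] N])
  fix p
  show "p \<notin> XP \<Longrightarrow> Lan_transpose N f p = 0\<^sub>m (fst N p) (fst (Lan.obj M) p)"
    using floor_dom_subset by (auto simp: Lan_transpose_def fst_res_obj)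
  show "Lan_transpose N f p \<in> carrier_mat (fst N p) (fst (Lan.obj M) p)"
    by (rule Lan_transpose_carrier[OF N f])
  fix q assume pq: "p \<in> XP" "q \<in> XP" "grid_le p q"
  show "Lan_transpose N f q * snd (Lan.obj M) p q = snd N p q * Lan_transpose N f p"
  proof (cases "p \<in> floor_dom")
    case True
    then show ?thesis by (rule Lan_transpose_natural[OF M N f _ pq(2,3)])
  next
    case False
    then show ?thesis
      by (intro mult_zero_cols_eq[OF Lan_transpose_carrier[OF N f] _ is_rep_carrier[OF N]])
        (use is_rep_carrier[OF Lan.is_rep_obj[OF M], of p q] Lan_transpose_carrier[OF N f, of p] in
          \<open>simp_all add: fst_res_obj\<close>)
  qed
qed

lemma Lan_transpose_Res_mor:
  assumes M: "is_rep XQ grid_le M" and g: "is_mor XP grid_le (Lan.obj M) N g"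
  shows "Lan_transpose N (Res.mor g) = g"
proof
  fix p
  have c: "g p \<in> carrier_mat (fst N p) (fst (Lan.obj M) p)" by (rule is_mor_carrier[OF g])
  show "Lan_transpose N (Res.mor g) p = g p"
  proof (cases "p \<in> floor_dom")
    case True
    have fp: "grid_floor p \<in> XQ" using grid_floor_in_XQ[OF True] .
    have "g p * snd (Lan.obj M) (incl_floor p) p = snd N (incl_floor p) p * g (incl_floor p)"
      using is_morD(4)[OF g incl_in_XP[OF fp] _ incl_grid_floor_le[OF True]] True floor_dom_subset by blast
    then show ?thesis
      using True fp c snd_Lan_obj_incl_floor[OF M True] by (simp add: Lan_transpose_def res_mor_apply fst_res_obj)
  next
    case False
    then show ?thesis using c by (intro carrier_mat_degenerate_eq[of _ "fst N p" 0]) (auto simp: Lan_transpose_def fst_res_obj)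
  qed
qed

lemma Res_mor_Lan_transpose:
  assumes M: "is_rep XQ grid_le M" and N: "is_rep XP grid_le N" and f: "is_mor XQ grid_le M (Res.obj N) f"
  shows "Res.mor (Lan_transpose N f) = f"
proof
  fix q
  show "Res.mor (Lan_transpose N f) q = f q"
  proof (cases "q \<in> XQ")
    case True
    then show ?thesis
      using incl_in_floor_dom grid_floor_incl is_repD(3)[OF N incl_in_XP[OF True]] is_mor_carrier[OF f, of q]
      by (simp add: res_mor_apply Lan_transpose_def fst_res_obj)
  next
    case False
    then show ?thesis using is_morD(3)[OF f False] is_repD(1)[OF M False] by (simp add: res_mor_apply fst_res_obj)
  qed
qed

lemma Res_mor_comp_Lan_mor:
  assumes a: "is_mor XQ grid_le M' M a"
  shows "Res.mor (comp_mor g (Lan.mor a)) = comp_mor (Res.mor g) a"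
proof
  fix q show "Res.mor (comp_mor g (Lan.mor a)) q = comp_mor (Res.mor g) a q"
  proof (cases "q \<in> XQ")
    case True then show ?thesis using incl_in_floor_dom grid_floor_incl by (simp add: res_mor_apply comp_mor_def)
  next
    case False
    then show ?thesis
      using is_morD(3)[OF a False] is_repD(1)[OF is_morD(1)[OF a] False] is_repD(1)[OF is_morD(2)[OF a] False]
      by (simp add: res_mor_apply comp_mor_def)
  qed
qed

lemma left_adjoint_Lan: "left_adjoint_to_res XQ grid_le XP grid_le incl Lan.obj (\<lambda>M N f. Lan.mor f)"
  unfolding left_adjoint_to_res_def
proof (intro conjI exI[of _ "\<lambda>M N g. Res.mor g"] allI impI)
  fix M :: "('b list, 'k::field) prep" and N :: "('a list, 'k) prep"
  assume "is_fp XQ grid_le M \<and> is_fp XP grid_le N"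
  then have M: "is_rep XQ grid_le M" and N: "is_rep XP grid_le N" unfolding is_fp_def by auto
  show "bij_betw Res.mor {g. is_mor XP grid_le (Lan.obj M) N g} {f. is_mor XQ grid_le M (Res.obj N) f}"
  proof (rule bij_betw_byWitness[where f'="Lan_transpose N"])
    show "\<forall>g\<in>{g. is_mor XP grid_le (Lan.obj M) N g}. Lan_transpose N (Res.mor g) = g"
      using Lan_transpose_Res_mor[OF M] by blast
    show "\<forall>f\<in>{f. is_mor XQ grid_le M (Res.obj N) f}. Res.mor (Lan_transpose N f) = f"
      using Res_mor_Lan_transpose[OF M N] by blast
    show "Res.mor ` {g. is_mor XP grid_le (Lan.obj M) N g} \<subseteq> {f. is_mor XQ grid_le M (Res.obj N) f}"
      using Res.is_mor_mor Res_obj_Lan_obj[OF M] by fastforce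
    show "Lan_transpose N ` {f. is_mor XQ grid_le M (Res.obj N) f} \<subseteq> {g. is_mor XP grid_le (Lan.obj M) N g}"
      using is_mor_Lan_transpose[OF M N] by blast
  qed
next
  show "is_functor XQ grid_le XP grid_le Lan.obj (\<lambda>M N f. Lan.mor f)" by (rule is_functor_Lan)
next
  fix M M' :: "('b list, 'k::field) prep" and N :: "('a list, 'k) prep" and a g
  assume "is_fp XQ grid_le M \<and> is_fp XQ grid_le M' \<and> is_fp XP grid_le N \<and>
    is_mor XQ grid_le M' M a \<and> is_mor XP grid_le (Lan.obj M) N g"
  then show "Res.mor (comp_mor g (Lan.mor a)) = comp_mor (Res.mor g) a"
    using Res_mor_comp_Lan_mor by blast
next
  fix b g
  show "Res.mor (comp_mor b g) = comp_mor (Res.mor b) (Res.mor g)" by (rule Res.mor_comp)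
qed

lemma exact_functor_Lan: "exact_functor XQ grid_le XP grid_le Lan.obj (\<lambda>M N f. Lan.mor f)"
  unfolding exact_functor_def using Lan.short_exact_mor by blast

lemma Res_mor_Lan_mor:
  assumes f: "is_mor XQ grid_le M N f"
  shows "Res.mor (Lan.mor f) = f"
proof
  fix q show "Res.mor (Lan.mor f) q = f q"
  proof (cases "q \<in> XQ")
    case True then show ?thesis using incl_in_floor_dom grid_floor_incl by (simp add: res_mor_apply)
  next
    case False
    then show ?thesis
      using is_morD(3)[OF f False] is_repD(1)[OF is_morD(1)[OF f] False] is_repD(1)[OF is_morD(2)[OF f] False]
      by (simp add: res_mor_apply)
  qed
qed

text \<open>A morphism between Kan extensions is determined by its values on the image of \<open>\<iota>\<close>, since
  \<open>Lan.obj M\<close> is the identity from \<open>incl_floor p\<close> to \<open>p\<close>.\<close>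

lemma Lan_mor_Res_mor:
  assumes M: "is_rep XQ grid_le M" and N: "is_rep XQ grid_le N"
    and g: "is_mor XP grid_le (Lan.obj M) (Lan.obj N) g"
  shows "Lan.mor (Res.mor g) = g"
proof
  fix p
  have c: "g p \<in> carrier_mat (fst (Lan.obj N) p) (fst (Lan.obj M) p)" for p by (rule is_mor_carrier[OF g])
  show "Lan.mor (Res.mor g) p = g p"
  proof (cases "p \<in> floor_dom")
    case True
    have fp: "grid_floor p \<in> XQ" using grid_floor_in_XQ[OF True] .
    have "g p * snd (Lan.obj M) (incl_floor p) p = snd (Lan.obj N) (incl_floor p) p * g (incl_floor p)"
      using is_morD(4)[OF g incl_in_XP[OF fp] _ incl_grid_floor_le[OF True]] True floor_dom_subset by blast
    then have "g p = g (incl_floor p)"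
      using snd_Lan_obj_incl_floor[OF M True] snd_Lan_obj_incl_floor[OF N True] c[of p] c[of "incl_floor p"]
        True incl_in_floor_dom[OF fp] grid_floor_incl[OF fp]
      by (simp add: fst_res_obj)
    then show ?thesis using True fp by (simp add: res_mor_apply)
  next
    case False
    then show ?thesis using c[of p] by (intro carrier_mat_degenerate_eq[of _ 0 0]) (auto simp: res_mor_apply fst_res_obj)
  qed
qed

lemma fully_faithful_Lan: "fully_faithful XQ grid_le XP grid_le Lan.obj (\<lambda>M N f. Lan.mor f)"
  unfolding fully_faithful_def
proof (intro allI impI)
  fix M N :: "('b list, 'k::field) prep"
  assume "is_fp XQ grid_le M \<and> is_fp XQ grid_le N"
  then have M: "is_rep XQ grid_le M" and N: "is_rep XQ grid_le N" unfolding is_fp_def by auto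
  show "bij_betw Lan.mor {f. is_mor XQ grid_le M N f} {g. is_mor XP grid_le (Lan.obj M) (Lan.obj N) g}"
  proof (rule bij_betw_byWitness[where f'="Res.mor"])
    show "\<forall>f\<in>{f. is_mor XQ grid_le M N f}. Res.mor (Lan.mor f) = f" using Res_mor_Lan_mor by blast
    show "\<forall>g\<in>{g. is_mor XP grid_le (Lan.obj M) (Lan.obj N) g}. Lan.mor (Res.mor g) = g"
      using Lan_mor_Res_mor[OF M N] by blast
    show "Lan.mor ` {f. is_mor XQ grid_le M N f} \<subseteq> {g. is_mor XP grid_le (Lan.obj M) (Lan.obj N) g}"
      using Lan.is_mor_mor by blast
    show "Res.mor ` {g. is_mor XP grid_le (Lan.obj M) (Lan.obj N) g} \<subseteq> {f. is_mor XQ grid_le M N f}"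
      using Res.is_mor_mor Res_obj_Lan_obj[OF M] Res_obj_Lan_obj[OF N] by fastforce
  qed
qed

end

context preordered_set
begin

lemma is_mor_indicator_transfer:
  assumes TX: "T \<subseteq> X" and cvT: "convex_in X lr T" and SX: "S \<subseteq> X" and cvS: "convex_in X lr S"
    and down: "\<And>p p'. p \<in> T \<Longrightarrow> p' \<in> T \<Longrightarrow> p' \<in> S \<Longrightarrow> lr p p' \<Longrightarrow> p \<in> S"
    and up: "\<And>p p'. p \<in> T \<Longrightarrow> p \<in> S \<Longrightarrow> p' \<in> S \<Longrightarrow> lr p p' \<Longrightarrow> p' \<in> T"
  shows "is_mor X lr (indicator_rep lr T) (indicator_rep lr S :: ('p, 'k::field) prep)
    (\<lambda>p. if p \<in> T \<and> p \<in> S then 1\<^sub>m 1 else 0\<^sub>m (if p \<in> S then 1 else 0) (if p \<in> T then 1 else 0))"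
    (is "is_mor _ _ ?T ?S ?u")
proof (rule is_morI[OF is_rep_indicator[OF TX cvT] is_rep_indicator[OF SX cvS]])
  fix p
  show "?u p \<in> carrier_mat (fst ?S p) (fst ?T p)" by (simp add: fst_indicator_rep)
  show "p \<notin> X \<Longrightarrow> ?u p = 0\<^sub>m (fst ?S p) (fst ?T p)" using TX SX by (auto simp: fst_indicator_rep)
  fix p' assume "p \<in> X" "p' \<in> X" and pp: "lr p p'"
  show "?u p' * snd ?T p p' = snd ?S p p' * ?u p"
  proof (cases "p \<in> T \<and> p' \<in> S")
    case True
    then show ?thesis using down[of p p'] up[of p p'] pp
      by (cases "p' \<in> T"; cases "p \<in> S") (auto simp: snd_indicator_rep intro!: mult_zero_inner_dim)
  next
    case False
    then show ?thesis
      by (intro carrier_mat_degenerate_eq[of _ "fst ?S p'" "fst ?T p"] mult_carrier_mat[OF _ indicator_rep_carrier]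
        mult_carrier_mat[OF indicator_rep_carrier]) (auto simp: fst_indicator_rep)
  qed
qed

end

section \<open>Spread-approximations\<close>

context finite_aligned_grid
begin

definition floor_preimage :: "'b list set \<Rightarrow> 'a list set" where
  "floor_preimage S = {p \<in> floor_dom. grid_floor p \<in> S}"

lemma floor_preimage_subset: "floor_preimage S \<subseteq> XP"
  using floor_dom_subset by (auto simp: floor_preimage_def)

lemma incl_in_floor_preimage: "s \<in> S \<Longrightarrow> S \<subseteq> XQ \<Longrightarrow> incl s \<in> floor_preimage S"
  using incl_in_floor_dom grid_floor_incl by (auto simp: floor_preimage_def)

lemma Lan_obj_indicator: "Lan.obj (indicator_rep grid_le S) = indicator_rep grid_le (floor_preimage S)"
  unfolding floor_preimage_def by (rule Lan.obj_indicator)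

lemma convex_floor_preimage:
  assumes "S \<subseteq> XQ" and "convex_in XQ grid_le S"
  shows "convex_in XP grid_le (floor_preimage S)"
  unfolding convex_in_def
proof (intro ballI impI)
  fix s s' p assume s: "s \<in> floor_preimage S" "s' \<in> floor_preimage S" and p: "p \<in> XP"
    and le: "grid_le s p \<and> grid_le p s'"
  have sD: "s \<in> floor_dom" "s' \<in> floor_dom" using s by (auto simp: floor_preimage_def)
  then have pD: "p \<in> floor_dom" using floor_dom_upclosed p le by blast
  have "grid_le (grid_floor s) (grid_floor p)" "grid_le (grid_floor p) (grid_floor s')"
    using grid_floor_mono sD pD le by blast+
  then have "grid_floor p \<in> S"
    using assms(2) s grid_floor_in_XQ[OF pD] unfolding convex_in_def floor_preimage_def by blast
  then show "p \<in> floor_preimage S" using pD by (simp add: floor_preimage_def)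
qed

text \<open>Every point of a floor preimage is comparable with the image of its floor, so zigzags in
  \<open>S\<close> lift along \<open>\<iota>\<close>.\<close>

lemma connected_floor_preimage:
  assumes SX: "S \<subseteq> XQ" and S: "connected_in grid_le S"
  shows "connected_in grid_le (floor_preimage S)"
  unfolding connected_in_def
proof (intro conjI ballI)
  let ?RS = "\<lambda>x y. x \<in> S \<and> y \<in> S \<and> (grid_le x y \<or> grid_le y x)"
  let ?RP = "\<lambda>x y. x \<in> floor_preimage S \<and> y \<in> floor_preimage S \<and> (grid_le x y \<or> grid_le y x)"
  show "floor_preimage S \<noteq> {}" using S incl_in_floor_preimage[OF _ SX] unfolding connected_in_def by blast
  have lift: "?RP\<^sup>*\<^sup>* (incl s) (incl t)" if "?RS\<^sup>*\<^sup>* s t" for s t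
    using that
  proof (induct rule: rtranclp_induct)
    case (step y z)
    then have "?RP (incl y) (incl z)" using incl_in_floor_preimage[OF _ SX] incl_mono SX by blast
    then show ?case using step(3) by (rule rtranclp.rtrancl_into_rtrancl[rotated])
  qed simp
  have down: "?RP p (incl (grid_floor p)) \<and> ?RP (incl (grid_floor p)) p" if "p \<in> floor_preimage S" for p
    using that incl_in_floor_preimage[OF _ SX] incl_grid_floor_le by (auto simp: floor_preimage_def)
  fix p p' assume p: "p \<in> floor_preimage S" and p': "p' \<in> floor_preimage S"
  then have "?RS\<^sup>*\<^sup>* (grid_floor p) (grid_floor p')" using S unfolding connected_in_def floor_preimage_def by blast
  then have "?RP\<^sup>*\<^sup>* (incl (grid_floor p)) (incl (grid_floor p'))" by (rule lift)
  moreover have "?RP\<^sup>*\<^sup>* (incl (grid_floor p')) p'" using down[OF p'] by blast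
  ultimately have "?RP\<^sup>*\<^sup>* (incl (grid_floor p)) p'" by (rule rtranclp_trans)
  then show "?RP\<^sup>*\<^sup>* p p'" using down[OF p] by (blast intro: converse_rtranclp_into_rtranclp)
qed

lemma spread_floor_preimage: "spread XQ grid_le S \<Longrightarrow> spread XP grid_le (floor_preimage S)"
  unfolding spread_def using floor_preimage_subset convex_floor_preimage connected_floor_preimage by blast

lemma spread_summand_Lan_obj:
  assumes "spread_summand XQ grid_le (C :: ('b list, 'k::field) prep)"
  shows "spread_summand XP grid_le (Lan.obj C)"
proof -
  obtain C' Ss u where C: "is_fp XQ grid_le C" and C': "is_fp XQ grid_le C'"
    and Ss: "\<forall>S\<in>set Ss. spread XQ grid_le S \<and> is_fp XQ grid_le (indicator_rep grid_le S :: ('b list, 'k) prep)"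
    and u: "is_iso XQ grid_le (dsum C C') (dsum_list (map (indicator_rep grid_le) Ss)) u"
    using assms unfolding spread_summand_def by blast
  have obj_sum: "Lan.obj (dsum_list (map (indicator_rep grid_le) Ss)) =
    dsum_list (map (indicator_rep grid_le) (map floor_preimage Ss))"
    unfolding Lan.obj_dsum_list map_map by (simp add: comp_def Lan_obj_indicator)
  have "is_iso XP grid_le (dsum (Lan.obj C) (Lan.obj C'))
    (dsum_list (map (indicator_rep grid_le) (map floor_preimage Ss))) (Lan.mor u)"
    using Lan.is_iso_mor[OF u] unfolding Lan.obj_dsum obj_sum .
  moreover have "spread XP grid_le S \<and> is_fp XP grid_le (indicator_rep grid_le S :: ('a list, 'k) prep)"
    if "S \<in> set (map floor_preimage Ss)" for S
    using that Ss spread_floor_preimage is_fp_Lan_obj[of "indicator_rep grid_le _"]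
    by (auto simp: Lan_obj_indicator)
  ultimately show ?thesis
    unfolding spread_summand_def using is_fp_Lan_obj[OF C] is_fp_Lan_obj[OF C'] by blast
qed

lemma fibre_join:
  assumes p: "p \<in> floor_dom" and x: "x \<in> floor_dom" and fx: "grid_floor x = grid_floor p"
  shows "grid_join p x \<in> floor_dom" and "grid_floor (grid_join p x) = grid_floor p"
    and "grid_le p (grid_join p x)" and "grid_le x (grid_join p x)"
proof -
  have "p \<in> XP" "x \<in> XP" using p x floor_dom_subset by blast+
  then have l: "length p = length x" by (simp add: mem_grid)
  show "grid_join p x \<in> floor_dom" using grid_join_in_floor_dom p \<open>x \<in> XP\<close> by blast
  show "grid_floor (grid_join p x) = grid_floor p"
    using grid_floor_join[OF p x] fx grid_join_eq_right[OF grid_le_refl] by simp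
  show "grid_le p (grid_join p x)" "grid_le x (grid_join p x)" using grid_le_join1[OF l] grid_le_join2[OF l] .
qed

lemma join_incl:
  assumes p: "p \<in> floor_dom" and q: "q \<in> XQ" and le: "grid_le (grid_floor p) q"
  shows "grid_join p (incl q) \<in> floor_dom" and "grid_floor (grid_join p (incl q)) = q"
    and "grid_le p (grid_join p (incl q))"
proof -
  have "p \<in> XP" using p floor_dom_subset by blast
  then have l: "length p = length (incl q)" by (simp add: mem_grid)
  show "grid_join p (incl q) \<in> floor_dom" using grid_join_in_floor_dom p incl_in_XP[OF q] by blast
  show "grid_floor (grid_join p (incl q)) = q" by (rule grid_floor_join_incl[OF p q le])
  show "grid_le p (grid_join p (incl q))" by (rule grid_le_join1[OF l])
qed

end

text \<open>On each fibre of the floor map that \<open>T\<close> meets, \<open>g\<close> is constant, since the transition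
  maps of \<open>Lan.obj M\<close> inside a fibre are identities, and it vanishes unless \<open>T\<close> contains
  everything in the fibre above its own points.\<close>

locale spread_mor_into_Lan = finite_aligned_grid Ps Qs \<iota>s
  for Ps :: "'a::linorder set list" and Qs :: "'b::linorder set list" and \<iota>s +
  fixes M :: "('b list, 'k::field) prep" and T :: "'a list set" and g :: "('a list, 'k) pmor"
  assumes M: "is_rep XQ grid_le M"
    and T: "spread XP grid_le T"
    and g: "is_mor XP grid_le (indicator_rep grid_le T) (Lan.obj M) g"
begin

lemma T_subset: "T \<subseteq> XP" and convex_T: "convex_in XP grid_le T"
  using T unfolding spread_def by blast+

lemma g_carrier:
  assumes "p \<in> T" and "p \<in> floor_dom"
  shows "g p \<in> carrier_mat (fst M (grid_floor p)) 1"
  using P.is_mor_from_indicatorD(1)[OF T_subset g assms(1)] assms(2) by (simp add: fst_res_obj)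

lemma g_zero_outside_floor_dom: "p \<notin> floor_dom \<Longrightarrow> g p = 0\<^sub>m 0 (fst (indicator_rep grid_le T :: ('a list, 'k) prep) p)"
  using is_mor_carrier[OF g, of p] by (intro carrier_mat_degenerate_eq) (auto simp: fst_res_obj)

lemma snd_Lan_obj_fibre:
  "p \<in> floor_dom \<Longrightarrow> y \<in> floor_dom \<Longrightarrow> grid_le p y \<Longrightarrow> grid_floor y = grid_floor p \<Longrightarrow>
    snd (Lan.obj M) p y = 1\<^sub>m (fst M (grid_floor p))"
  using is_repD(3)[OF M grid_floor_in_XQ] by (simp add: snd_res_obj)

lemma g_eq_in_fibre:
  assumes "p \<in> T" "y \<in> T" "p \<in> floor_dom" "y \<in> floor_dom" "grid_le p y" "grid_floor y = grid_floor p"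
  shows "g y = g p"
  using P.is_mor_from_indicatorD(2)[OF T_subset g, of p y] assms snd_Lan_obj_fibre
    left_mult_one_mat[OF g_carrier[OF assms(1,3)]] by simp

lemma g_zero_fibre_exit:
  assumes "p \<in> T" "y \<notin> T" "p \<in> floor_dom" "y \<in> floor_dom" "grid_le p y" "grid_floor y = grid_floor p"
  shows "g p = 0\<^sub>m (fst M (grid_floor p)) 1"
  using P.is_mor_from_indicatorD(3)[OF T_subset g, of p y] assms snd_Lan_obj_fibre floor_dom_subset
    left_mult_one_mat[OF g_carrier[OF assms(1,3)]] by (auto simp: fst_res_obj)

definition saturated :: "'b list set" where
  "saturated = {q \<in> XQ. (\<exists>p\<in>T. p \<in> floor_dom \<and> grid_floor p = q) \<and>
     (\<forall>x\<in>floor_dom. \<forall>t\<in>T. grid_floor x = q \<and> grid_le t x \<longrightarrow> x \<in> T)}"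

definition fibre_value :: "'b list \<Rightarrow> 'k mat" where
  "fibre_value q = g (SOME p. p \<in> T \<and> p \<in> floor_dom \<and> grid_floor p = q)"

lemma saturated_subset: "saturated \<subseteq> XQ"
  by (auto simp: saturated_def)

lemma saturatedD:
  "q \<in> saturated \<Longrightarrow> x \<in> floor_dom \<Longrightarrow> t \<in> T \<Longrightarrow> grid_floor x = q \<Longrightarrow> grid_le t x \<Longrightarrow> x \<in> T"
  unfolding saturated_def by blast

lemma saturated_point:
  assumes "q \<in> saturated"
  obtains p where "p \<in> T" "p \<in> floor_dom" "grid_floor p = q"
  using assms unfolding saturated_def by blast

lemma fibre_value_eq:
  assumes q: "q \<in> saturated" and p: "p \<in> T" "p \<in> floor_dom" "grid_floor p = q"
  shows "fibre_value q = g p"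
proof -
  have "\<exists>p. p \<in> T \<and> p \<in> floor_dom \<and> grid_floor p = q" using p by blast
  then obtain p' where p': "p' \<in> T" "p' \<in> floor_dom" "grid_floor p' = q" and v: "fibre_value q = g p'"
    unfolding fibre_value_def by (metis (mono_tags, lifting) someI_ex)
  let ?y = "grid_join p p'"
  note y = fibre_join[OF p(2) p'(2)] and fp = p(3) p'(3)
  have "?y \<in> T" using saturatedD[OF q y(1) p(1)] y fp by simp
  then show ?thesis using g_eq_in_fibre[OF p(1) _ p(2) y(1) y(3)] g_eq_in_fibre[OF p'(1) _ p'(2) y(1) y(4)] y fp v
    by simp
qed

lemma fibre_value_carrier: "q \<in> saturated \<Longrightarrow> fibre_value q \<in> carrier_mat (fst M q) 1"
  by (metis saturated_point fibre_value_eq g_carrier)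

lemma g_zero_unsaturated:
  assumes p: "p \<in> T" "p \<in> floor_dom" and unsat: "grid_floor p \<notin> saturated"
  shows "g p = 0\<^sub>m (fst M (grid_floor p)) 1"
proof -
  obtain x t where x: "x \<in> floor_dom" "t \<in> T" "grid_floor x = grid_floor p" "grid_le t x" "x \<notin> T"
    using unsat p grid_floor_in_XQ[OF p(2)] unfolding saturated_def by blast
  note y = fibre_join[OF p(2) x(1) x(3)]
  have "grid_join p x \<notin> T"
    using convex_T x floor_dom_subset y(4) unfolding convex_in_def by blast
  then show ?thesis using g_zero_fibre_exit[OF p(1) _ p(2) y(1) y(3) y(2)] by simp
qed

lemma fibre_value_transition:
  assumes q: "q \<in> saturated" and q': "q' \<in> XQ" and le: "grid_le q q'"
  shows "snd M q q' * fibre_value q = (if q' \<in> saturated then fibre_value q' else 0\<^sub>m (fst M q') 1)"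
proof -
  obtain p where p: "p \<in> T" "p \<in> floor_dom" "grid_floor p = q" using saturated_point[OF q] .
  let ?p' = "grid_join p (incl q')"
  note p' = join_incl[OF p(2) q', unfolded p(3), OF le]
  have pX: "p \<in> XP" "?p' \<in> XP" using p(2) p'(1) floor_dom_subset by blast+
  have LanM: "snd (Lan.obj M) p ?p' = snd M q q'" using p p' by (simp add: snd_res_obj)
  show ?thesis
  proof (cases "?p' \<in> T")
    case True
    have "g ?p' = snd M q q' * fibre_value q"
      using P.is_mor_from_indicatorD(2)[OF T_subset g p(1) True p'(3)] LanM fibre_value_eq[OF q p] by simp
    moreover have "g ?p' = (if q' \<in> saturated then fibre_value q' else 0\<^sub>m (fst M q') 1)"
      using fibre_value_eq[OF _ True p'(1,2)] g_zero_unsaturated[OF True p'(1)] p'(2) by auto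
    ultimately show ?thesis by simp
  next
    case False
    then have "snd M q q' * fibre_value q = 0\<^sub>m (fst M q') 1"
      using P.is_mor_from_indicatorD(3)[OF T_subset g p(1) pX(2) False p'(3)] LanM fibre_value_eq[OF q p] p'
      by (simp add: fst_res_obj)
    moreover have "q' \<notin> saturated" using saturatedD[of q' ?p' p] p p' False by blast
    ultimately show ?thesis by simp
  qed
qed

lemma convex_saturated: "convex_in XQ grid_le saturated"
  unfolding convex_in_def
proof (intro ballI impI)
  fix q1 q2 q assume q1: "q1 \<in> saturated" and q2: "q2 \<in> saturated" and q: "q \<in> XQ"
    and le: "grid_le q1 q \<and> grid_le q q2"
  obtain p1 where p1: "p1 \<in> T" "p1 \<in> floor_dom" "grid_floor p1 = q1" using saturated_point[OF q1] .
  obtain p2 where p2: "p2 \<in> T" "p2 \<in> floor_dom" "grid_floor p2 = q2" using saturated_point[OF q2] .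
  have above_q2: "grid_join x p2 \<in> T \<and> grid_le x (grid_join x p2)"
    if x: "x \<in> floor_dom" "grid_floor x = q" and t: "t \<in> T" "grid_le t x" for x t
  proof -
    have "x \<in> XP" "p2 \<in> XP" using x p2 floor_dom_subset by blast+
    then have l: "length x = length p2" by (simp add: mem_grid)
    have "grid_floor (grid_join x p2) = q2"
      using grid_floor_join[OF x(1) p2(2)] x p2 grid_join_eq_right[OF conjunct2[OF le]] by simp
    moreover have "grid_le t (grid_join x p2)" using t(2) grid_le_join1[OF l] grid_le_trans by blast
    ultimately show ?thesis
      using saturatedD[OF q2 grid_join_in_floor_dom[OF x(1)] t(1)] \<open>p2 \<in> XP\<close> grid_le_join1[OF l] by blast
  qed
  note r = join_incl[OF p1(2) q, unfolded p1(3), OF conjunct1[OF le]]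
  have in_T: "x \<in> T" if "x \<in> floor_dom" "grid_floor x = q" "t \<in> T" "grid_le t x" for x t
    using above_q2[OF that] that convex_T floor_dom_subset unfolding convex_in_def by blast
  have "grid_join p1 (incl q) \<in> T" using in_T[OF r(1) r(2) p1(1) r(3)] .
  then show "q \<in> saturated" using q r in_T unfolding saturated_def by blast
qed

definition support :: "'b list set" where
  "support = {q \<in> saturated. fibre_value q \<noteq> 0\<^sub>m (fst M q) 1}"

lemma support_subset: "support \<subseteq> XQ"
  using saturated_subset by (auto simp: support_def)

lemma convex_support: "convex_in XQ grid_le support"
  unfolding convex_in_def
proof (intro ballI impI)
  fix q1 q2 q assume q1: "q1 \<in> support" and q2: "q2 \<in> support" and q: "q \<in> XQ"
    and le: "grid_le q1 q \<and> grid_le q q2"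
  have qZ: "q \<in> saturated"
    using convex_saturated q1 q2 q le unfolding convex_in_def support_def by blast
  have "fibre_value q2 = snd M q q2 * fibre_value q"
    using fibre_value_transition[OF qZ _ conjunct2[OF le]] q2 saturated_subset by (auto simp: support_def)
  then have "fibre_value q \<noteq> 0\<^sub>m (fst M q) 1"
    using q2 is_rep_carrier[OF M, of q q2] by (auto simp: support_def)
  then show "q \<in> support" using qZ by (simp add: support_def)
qed

definition descended_mor :: "('b list, 'k) pmor" where
  "descended_mor q = (if q \<in> support then fibre_value q else 0\<^sub>m (fst M q) 0)"

lemma is_mor_descended_mor: "is_mor XQ grid_le (indicator_rep grid_le support) M descended_mor"
  unfolding descended_mor_def
proof (rule Q.is_mor_from_indicatorI[OF support_subset convex_support M])
  fix q assume q: "q \<in> support"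
  then have qZ: "q \<in> saturated" by (simp add: support_def)
  show "fibre_value q \<in> carrier_mat (fst M q) 1" by (rule fibre_value_carrier[OF qZ])
  fix q'
  show "q' \<in> support \<Longrightarrow> grid_le q q' \<Longrightarrow> fibre_value q' = snd M q q' * fibre_value q"
    using fibre_value_transition[OF qZ] support_subset by (auto simp: support_def)
  show "q' \<in> XQ \<Longrightarrow> q' \<notin> support \<Longrightarrow> grid_le q q' \<Longrightarrow> snd M q q' * fibre_value q = 0\<^sub>m (fst M q') 1"
    using fibre_value_transition[OF qZ] by (auto simp: support_def)
qed

lemma g_zero_outside_support:
  assumes p: "p \<in> T" "p \<notin> floor_preimage support"
  shows "g p = 0\<^sub>m (fst (Lan.obj M) p) 1"
proof (cases "p \<in> floor_dom")
  case True
  then show ?thesis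
    using p fibre_value_eq[OF _ p(1) True refl] g_zero_unsaturated[OF p(1) True]
    by (auto simp: floor_preimage_def support_def fst_res_obj)
next
  case False
  then show ?thesis using g_zero_outside_floor_dom p by (simp add: fst_res_obj fst_indicator_rep)
qed

definition support_transfer :: "('a list, 'k) pmor" where
  "support_transfer p = (if p \<in> T \<and> p \<in> floor_preimage support then 1\<^sub>m 1
     else 0\<^sub>m (if p \<in> floor_preimage support then 1 else 0) (if p \<in> T then 1 else 0))"

lemma is_mor_support_transfer:
  "is_mor XP grid_le (indicator_rep grid_le T) (indicator_rep grid_le (floor_preimage support)) support_transfer"
  unfolding support_transfer_def
proof (rule P.is_mor_indicator_transfer[OF T_subset convex_T floor_preimage_subset
    convex_floor_preimage[OF support_subset convex_support]])
  fix p p' assume p: "p \<in> T" and p': "p' \<in> T" "p' \<in> floor_preimage support" and le: "grid_le p p'"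
  show "p \<in> floor_preimage support"
  proof (rule ccontr)
    assume "p \<notin> floor_preimage support"
    then have "g p' = snd (Lan.obj M) p p' * 0\<^sub>m (fst (Lan.obj M) p) 1"
      using P.is_mor_from_indicatorD(2)[OF T_subset g p p'(1) le] g_zero_outside_support[OF p] by simp
    then have "g p' = 0\<^sub>m (fst M (grid_floor p')) 1"
      using is_rep_carrier[OF Lan.is_rep_obj[OF M], of p p'] p' by (simp add: floor_preimage_def fst_res_obj)
    then show False
      using p' fibre_value_eq[OF _ p'(1) _ refl] by (auto simp: floor_preimage_def support_def)
  qed
next
  fix p p' assume "p \<in> T" "p' \<in> floor_preimage support" "grid_le p p'"
  then show "p' \<in> T" using saturatedD by (auto simp: floor_preimage_def support_def)
qed

lemma Lan_descended_mor_comp_support_transfer: "comp_mor (Lan.mor descended_mor) support_transfer = g"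
proof
  fix p
  have Lg: "is_mor XP grid_le (indicator_rep grid_le (floor_preimage support)) (Lan.obj M) (Lan.mor descended_mor)"
    using Lan.is_mor_mor[OF is_mor_descended_mor] unfolding Lan_obj_indicator .
  note c = is_mor_carrier[OF Lg, of p] is_mor_carrier[OF is_mor_support_transfer, of p] is_mor_carrier[OF g, of p]
  show "comp_mor (Lan.mor descended_mor) support_transfer p = g p"
  proof (cases "p \<in> T")
    case False
    then show ?thesis using c
      by (intro carrier_mat_degenerate_eq[of _ "fst (Lan.obj M) p" 0])
        (auto simp: comp_mor_def fst_indicator_rep intro: mult_carrier_mat)
  next
    case True
    show ?thesis
    proof (cases "p \<in> floor_preimage support")
      case True2: True
      then have "Lan.mor descended_mor p = g p"
        using True fibre_value_eq[OF _ True _ refl] by (auto simp: res_mor_apply descended_mor_def floor_preimage_def support_def)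
      then show ?thesis using True True2 c(3) by (simp add: comp_mor_def support_transfer_def fst_indicator_rep)
    next
      case False
      have "Lan.mor descended_mor p * support_transfer p = 0\<^sub>m (fst (Lan.obj M) p) 1"
        using c False True by (intro mult_zero_inner_dim) (auto simp: fst_indicator_rep support_transfer_def)
      then show ?thesis using g_zero_outside_support[OF True False] by (simp add: comp_mor_def)
    qed
  qed
qed

end

context finite_aligned_grid
begin

lemma Lan_lift:
  fixes C M :: "('b list, 'k::field) prep"
  assumes sa: "spread_approx XQ grid_le C M f"
    and T: "spread XP grid_le T" and g: "is_mor XP grid_le (indicator_rep grid_le T) (Lan.obj M) g"
  shows "\<exists>h. is_mor XP grid_le (indicator_rep grid_le T) (Lan.obj C) h \<and> comp_mor (Lan.mor f) h = g"
proof -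
  have M: "is_rep XQ grid_le M" and f: "is_mor XQ grid_le C M f"
    using sa unfolding spread_approx_def is_fp_def by blast+
  interpret spread_mor_into_Lan Ps Qs \<iota>s M T g by unfold_locales (fact M T g)+
  obtain h where h: "is_mor XQ grid_le (indicator_rep grid_le support) C h" and fh: "comp_mor f h = descended_mor"
    using Q.lift_from_convex[OF finite_XQ support_subset convex_support is_mor_descended_mor f] sa
    unfolding spread_approx_def by blast
  have u: "is_mor XP grid_le (indicator_rep grid_le T) (Lan.obj (indicator_rep grid_le support)) support_transfer"
    using is_mor_support_transfer unfolding Lan_obj_indicator .
  have Lh: "is_mor XP grid_le (Lan.obj (indicator_rep grid_le support)) (Lan.obj C) (Lan.mor h)"
    by (rule Lan.is_mor_mor[OF h])
  have "comp_mor (Lan.mor f) (comp_mor (Lan.mor h) support_transfer) = g"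
    using comp_mor_assoc[OF u Lh Lan.is_mor_mor[OF f]] Lan_descended_mor_comp_support_transfer
    by (simp add: Lan.mor_comp[symmetric] fh)
  then show ?thesis using is_mor_comp[OF u Lh] by blast
qed

lemma preserves_spread_approx_Lan: "preserves_spread_approx XQ grid_le XP grid_le Lan.obj (\<lambda>M N f. Lan.mor f)"
  unfolding preserves_spread_approx_def spread_approx_def
  using is_fp_Lan_obj spread_summand_Lan_obj Lan.is_mor_mor Lan_lift[unfolded spread_approx_def] by blast

end

theorem propositionB:
  fixes Ps :: "'a::linorder set list" and Qs :: "'b::linorder set list"
    and \<iota>s :: "('b \<Rightarrow> 'a) list"
  assumes "aligned_grid_inclusion Qs Ps \<iota>s"
    and "\<forall>j<length Qs. finite (Qs ! j)"
  shows "\<exists>(Lo :: ('b list, 'k::field) prep \<Rightarrow> ('a list, 'k) prep)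
           (Lm :: ('b list, 'k) prep \<Rightarrow> ('b list, 'k) prep \<Rightarrow> ('b list, 'k) pmor \<Rightarrow> ('a list, 'k) pmor).
     left_adjoint_to_res (grid Qs) grid_le (grid Ps) grid_le (grid_map \<iota>s) Lo Lm \<and>
     exact_functor (grid Qs) grid_le (grid Ps) grid_le Lo Lm \<and>
     fully_faithful (grid Qs) grid_le (grid Ps) grid_le Lo Lm \<and>
     preserves_spread_approx (grid Qs) grid_le (grid Ps) grid_le Lo Lm"
proof -
  interpret finite_aligned_grid Ps Qs \<iota>s by unfold_locales (fact assms)+
  show ?thesis
    using left_adjoint_Lan exact_functor_Lan fully_faithful_Lan preserves_spread_approx_Lan by blast
qed

end
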